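(* Let $(G,N,\theta)_{\mathcal H}$ be an $\mathcal H$-triple and let $\mathcal P$ be a projective representation of $G_\theta$ associated with $\theta$, with entries in $\mathbb Q^{\mathrm{ab}}$ and factor set $\alpha$. (a) Let $g\in G_\theta$. Then $\mathcal P^g(y)=\mu_g(y)M\mathcal P(y)M^{-1}$ for all $y\in G_\theta$, where $\mu_g(y)=\dfrac{\alpha(g,g^{-1})}{\alpha(g,yg^{-1})\alpha(y,g^{-1})}$ and $M=\mathcal P(g)$. In particular, $\mu_g$ takes values in $\mathbb Q^{\mathrm{ab}}\setminus\{0\}$. (b) Let $(g,\sigma)\in(G\times\mathcal H)_\theta$ and write $g=tx$ with $t\in G_\theta$ and $x\in G$. Then $\theta^{x\sigma}=\theta$, $(G_\theta)^x=G_\theta$, and $\mu_{g\sigma}=\mu_t^{x\sigma}\mu_{x\sigma}$, where $\mu_t^{x\sigma}(y)=\sigma(\mu_t(xyx^{-1}))$ for $y\in G_\theta$.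
   Context: All groups are finite; $p$ is a fixed prime. $\mathbb Q^{\mathrm{ab}}\subseteq\mathbb C$ is generated by all roots of unity, $\mathcal G=\mathrm{Gal}(\mathbb Q^{\mathrm{ab}}/\mathbb Q)$, $\mathcal H\le\mathcal G$ consists of those $\sigma$ for which there is an integer $f$ with $\sigma(\xi)=\xi^{p^f}$ for all roots of unity $\xi$ of order prime to $p$. For $N\trianglelefteq G$, $\theta\in\mathrm{Irr}(N)$, $g\in G$, $\sigma\in\mathcal G$: $\theta^{g\sigma}(n)=\sigma(\theta(gng^{-1}))$; $(G\times\mathcal H)_\theta$ is the stabilizer of $\theta$; $\theta^{\mathcal H}$ the $\mathcal H$-orbit; $G_{\theta^{\mathcal H}}=\{g:\theta^g\in\theta^{\mathcal H}\}$. $(G,N,\theta)_{\mathcal H}$ is an $\mathcal H$-triple if $N\trianglelefteq G$, $\theta\in\mathrm{Irr}(N)$, $G_{\theta^{\mathcal H}}=G$. A projective representation $\mathcal P$ with factor set $\alpha$ satisfies $\mathcal P(x)\mathcal P(y)=\alpha(x,y)\mathcal P(xy)$; $\mathcal P$ on $G_\theta$ is associated with $\theta$ if $\mathcal P_N$ affords $\theta$ and $\mathcal P(ng)=\mathcal P(n)\mathcal P(g)$, $\mathcal P(gn)=\mathcal P(g)\mathcal P(n)$. For $(x,\sigma)\in G\times\mathcal G$ with $\theta^{x\sigma}=\theta$, $\mathcal P^{x\sigma}(y)=\sigma(\mathcal P(xyx^{-1}))$ (entrywise; $\mathcal P^x$ when $\sigma=1$), and $\mu_{x\sigma}:G_\theta\to\mathbb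 C^\times$ is the unique function, constant on $N$-cosets with $\mu_{x\sigma}(1)=1$, such that $\mathcal P^{x\sigma}(y)=\mu_{x\sigma}(y)L^{-1}\mathcal P(y)L$ for all $y$, for some invertible matrix $L$. *)

theory Defs
  imports "HOL-Algebra.Group" "HOL-Algebra.Coset" "Jordan_Normal_Form.Matrix"
    "HOL-Computational_Algebra.Primes"
begin

definition roots_of_unity :: "complex set" where
  "roots_of_unity = {z. \<exists>n::nat. n > 0 \<and> z ^ n = 1}"

definition is_subfield_C :: "complex set \<Rightarrow> bool" where
  "is_subfield_C F \<longleftrightarrow> 0 \<in> F \<and> 1 \<in> F \<and>
     (\<forall>a\<in>F. \<forall>b\<in>F. a + b \<in> F \<and> a - b \<in> F \<and> a * b \<in> F) \<and>
     (\<forall>a\<in>F. a \<noteq> 0 \<longrightarrow> inverse a \<in> F)"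

definition Qab :: "complex set" where
  "Qab = \<Inter> {F. is_subfield_C F \<and> roots_of_unity \<subseteq> F}"

text \<open>Elements of Gal(Q^ab/Q): field automorphisms of Q^ab, represented by
  functions on C whose behaviour outside Q^ab is irrelevant.\<close>
definition GalQab :: "(complex \<Rightarrow> complex) set" where
  "GalQab = {\<sigma>. bij_betw \<sigma> Qab Qab \<and>
     (\<forall>a\<in>Qab. \<forall>b\<in>Qab. \<sigma> (a + b) = \<sigma> a + \<sigma> b \<and> \<sigma> (a * b) = \<sigma> a * \<sigma> b)}"

text \<open>The subgroup H (for the fixed prime p): there is an integer f with
  sigma(xi) = xi^(p^f) for all roots of unity xi of order prime to p. For f < 0,
  xi^(p^f) is the unique root of unity eta of order prime to p with eta^(p^(-f)) = xi;
  since sigma(xi) is such a root of unity, this is expressed as sigma(xi)^(p^(-f)) = xi.\<close>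
definition HGal :: "nat \<Rightarrow> (complex \<Rightarrow> complex) set" where
  "HGal p = {\<sigma>\<in>GalQab. \<exists>f::int. \<forall>\<xi>. (\<exists>m::nat. m > 0 \<and> \<xi> ^ m = 1 \<and> coprime m p) \<longrightarrow>
      (if f \<ge> 0 then \<sigma> \<xi> = \<xi> ^ (p ^ nat f) else (\<sigma> \<xi>) ^ (p ^ nat (- f)) = \<xi>)}"

definition mat_trace :: "'c::comm_ring_1 mat \<Rightarrow> 'c" where
  "mat_trace A = (\<Sum>i<dim_row A. A $$ (i, i))"

definition is_rep :: "('a, 'b) monoid_scheme \<Rightarrow> 'a set \<Rightarrow> nat \<Rightarrow> ('a \<Rightarrow> complex mat) \<Rightarrow> bool" where
  "is_rep G N d \<rho> \<longleftrightarrow> (\<forall>n\<in>N. \<rho> n \<in> carrier_mat d d) \<and> \<rho> \<one>\<^bsub>G\<^esub> = 1\<^sub>m d \<and>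
     (\<forall>n\<in>N. \<forall>m\<in>N. \<rho> (n \<otimes>\<^bsub>G\<^esub> m) = \<rho> n * \<rho> m)"

definition invariant_subspace :: "'a set \<Rightarrow> nat \<Rightarrow> ('a \<Rightarrow> complex mat) \<Rightarrow> complex vec set \<Rightarrow> bool" where
  "invariant_subspace N d \<rho> W \<longleftrightarrow> W \<subseteq> carrier_vec d \<and> 0\<^sub>v d \<in> W \<and>
     (\<forall>v\<in>W. \<forall>w\<in>W. v + w \<in> W) \<and> (\<forall>c. \<forall>v\<in>W. c \<cdot>\<^sub>v v \<in> W) \<and>
     (\<forall>n\<in>N. \<forall>v\<in>W. \<rho> n *\<^sub>v v \<in> W)"

definition irr_rep :: "('a, 'b) monoid_scheme \<Rightarrow> 'a set \<Rightarrow> nat \<Rightarrow> ('a \<Rightarrow> complex mat) \<Rightarrow> bool" where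
  "irr_rep G N d \<rho> \<longleftrightarrow> is_rep G N d \<rho> \<and> d > 0 \<and>
     (\<forall>W. invariant_subspace N d \<rho> W \<longrightarrow> W = {0\<^sub>v d} \<or> W = carrier_vec d)"

definition irr_char :: "('a, 'b) monoid_scheme \<Rightarrow> 'a set \<Rightarrow> ('a \<Rightarrow> complex) \<Rightarrow> bool" where
  "irr_char G N \<theta> \<longleftrightarrow> (\<exists>d \<rho>. irr_rep G N d \<rho> \<and> (\<forall>n\<in>N. \<theta> n = mat_trace (\<rho> n)))"

definition fixes_char :: "('a, 'b) monoid_scheme \<Rightarrow> 'a set \<Rightarrow> ('a \<Rightarrow> complex) \<Rightarrow> 'a \<Rightarrow> (complex \<Rightarrow> complex) \<Rightarrow> bool" where
  "fixes_char G N \<theta> g \<sigma> \<longleftrightarrow> (\<forall>n\<in>N. \<sigma> (\<theta> (g \<otimes>\<^bsub>G\<^esub> n \<otimes>\<^bsub>G\<^esub> inv\<^bsub>G\<^esub> g)) = \<theta> n)"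

definition stab :: "('a, 'b) monoid_scheme \<Rightarrow> 'a set \<Rightarrow> ('a \<Rightarrow> complex) \<Rightarrow> 'a set" where
  "stab G N \<theta> = {g\<in>carrier G. fixes_char G N \<theta> g (\<lambda>z. z)}"

text \<open>(G,N,theta)_H is an H-triple: N normal, theta irreducible, G_{theta^H} = G.\<close>
definition H_triple :: "nat \<Rightarrow> ('a, 'b) monoid_scheme \<Rightarrow> 'a set \<Rightarrow> ('a \<Rightarrow> complex) \<Rightarrow> bool" where
  "H_triple p G N \<theta> \<longleftrightarrow> N \<lhd> G \<and> irr_char G N \<theta> \<and>
     {g\<in>carrier G. \<exists>\<sigma>\<in>HGal p. \<forall>n\<in>N. \<theta> (g \<otimes>\<^bsub>G\<^esub> n \<otimes>\<^bsub>G\<^esub> inv\<^bsub>G\<^esub> g) = \<sigma> (\<theta> n)} = carrier G"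

definition proj_rep :: "('a, 'b) monoid_scheme \<Rightarrow> 'a set \<Rightarrow> nat \<Rightarrow> ('a \<Rightarrow> complex mat) \<Rightarrow> ('a \<Rightarrow> 'a \<Rightarrow> complex) \<Rightarrow> bool" where
  "proj_rep G S d P \<alpha> \<longleftrightarrow> (\<forall>y\<in>S. P y \<in> carrier_mat d d \<and> invertible_mat (P y)) \<and>
     (\<forall>x\<in>S. \<forall>y\<in>S. \<alpha> x y \<noteq> 0 \<and> P x * P y = \<alpha> x y \<cdot>\<^sub>m P (x \<otimes>\<^bsub>G\<^esub> y))"

definition associated :: "('a, 'b) monoid_scheme \<Rightarrow> 'a set \<Rightarrow> ('a \<Rightarrow> complex) \<Rightarrow> nat \<Rightarrow> ('a \<Rightarrow> complex mat) \<Rightarrow> bool" where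
  "associated G N \<theta> d P \<longleftrightarrow> is_rep G N d P \<and> (\<forall>n\<in>N. mat_trace (P n) = \<theta> n) \<and>
     (\<forall>n\<in>N. \<forall>g\<in>stab G N \<theta>. P (n \<otimes>\<^bsub>G\<^esub> g) = P n * P g \<and> P (g \<otimes>\<^bsub>G\<^esub> n) = P g * P n)"

definition conj_proj :: "('a, 'b) monoid_scheme \<Rightarrow> ('a \<Rightarrow> complex mat) \<Rightarrow> 'a \<Rightarrow> (complex \<Rightarrow> complex) \<Rightarrow> 'a \<Rightarrow> complex mat" where
  "conj_proj G P x \<sigma> y = map_mat \<sigma> (P (x \<otimes>\<^bsub>G\<^esub> y \<otimes>\<^bsub>G\<^esub> inv\<^bsub>G\<^esub> x))"

definition mu :: "('a, 'b) monoid_scheme \<Rightarrow> 'a set \<Rightarrow> ('a \<Rightarrow> complex) \<Rightarrow> nat \<Rightarrow> ('a \<Rightarrow> complex mat) \<Rightarrow> 'a \<Rightarrow> (complex \<Rightarrow> complex) \<Rightarrow> 'a \<Rightarrow> complex" where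
  "mu G N \<theta> d P x \<sigma> = (THE \<mu>.
     (\<forall>y. y \<notin> stab G N \<theta> \<longrightarrow> \<mu> y = undefined) \<and>
     (\<forall>y\<in>stab G N \<theta>. \<mu> y \<noteq> 0) \<and>
     (\<forall>y\<in>stab G N \<theta>. \<forall>n\<in>N. \<mu> (n \<otimes>\<^bsub>G\<^esub> y) = \<mu> y) \<and>
     \<mu> \<one>\<^bsub>G\<^esub> = 1 \<and>
     (\<exists>L\<in>carrier_mat d d. \<exists>L'\<in>carrier_mat d d. L * L' = 1\<^sub>m d \<and> L' * L = 1\<^sub>m d \<and>
        (\<forall>y\<in>stab G N \<theta>. conj_proj G P x \<sigma> y = \<mu> y \<cdot>\<^sub>m (L' * P y * L))))"

end

theory Submission
  imports Defs "Jordan_Normal_Form.Spectral_Radius"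
begin

(*
  Part (a) is a computation inside P: from P(g) P(g^-1) = alpha(g, g^-1) and
  P(g) P(y) P(g^-1) = alpha(y, g^-1) alpha(g, y g^-1) P(g y g^-1) one reads off
  P^g(y) = P(g y g^-1) as the stated multiple of P(g) P(y) P(g)^-1.

  For part (b), mu_{x sigma} must first be shown to exist and to be unique. If (x, sigma) fixes
  theta, then P^{x sigma} restricted to N is a representation with character theta, hence similar
  to P_N, which is irreducible because theta is (character orthogonality). For y in G_theta the
  matrix P(y)^-1 L P^{x sigma}(y) L^-1 then commutes with P(N), so by Schur's lemma it is a
  scalar; this scalar is mu_{x sigma}(y), and the same Schur argument gives uniqueness. Finally,
  for g = t x one has P^{g sigma}(y) = sigma(P^t(x y x^-1)), and substituting the formula of (a)
  for P^t and the defining relation of mu_{x sigma} exhibits mu_t^{x sigma} mu_{x sigma} as a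
  valid choice of mu_{g sigma}.
*)

section \<open>Matrices\<close>

lemma index_mult_mat_sum:
  "A \<in> carrier_mat n k \<Longrightarrow> B \<in> carrier_mat k m \<Longrightarrow> i < n \<Longrightarrow> j < m \<Longrightarrow>
    (A * B) $$ (i, j) = (\<Sum>a<k. A $$ (i, a) * B $$ (a, j))"
  by (auto simp: scalar_prod_def atLeast0LessThan intro!: sum.cong)

lemma mat_trace_one_mat [simp]: "mat_trace (1\<^sub>m n) = of_nat n"
  unfolding mat_trace_def by simp

lemma mat_trace_mult_comm:
  assumes "A \<in> carrier_mat n n" "B \<in> carrier_mat n n"
  shows "mat_trace (A * B) = mat_trace (B * (A :: 'c :: comm_ring_1 mat))"
proof -
  have "mat_trace (A * B) = (\<Sum>i<n. \<Sum>a<n. A $$ (i, a) * B $$ (a, i))"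
    using assms unfolding mat_trace_def by (auto simp: scalar_prod_def atLeast0LessThan intro!: sum.cong)
  also have "\<dots> = (\<Sum>a<n. \<Sum>i<n. B $$ (a, i) * A $$ (i, a))"
    by (subst sum.swap) (simp add: mult.commute)
  also have "\<dots> = mat_trace (B * A)"
    using assms unfolding mat_trace_def by (auto simp: scalar_prod_def atLeast0LessThan intro!: sum.cong)
  finally show ?thesis .
qed

lemma smult_smult_mat: "a \<cdot>\<^sub>m (b \<cdot>\<^sub>m A) = (a * b) \<cdot>\<^sub>m (A :: 'c :: semigroup_mult mat)"
  by (intro eq_matI) (auto simp: mult.assoc)

lemma one_smult_mat [simp]: "(1 :: 'c :: monoid_mult) \<cdot>\<^sub>m A = A"
  by (intro eq_matI) auto

lemma map_mat_ident [simp]: "map_mat (\<lambda>z. z) A = A"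
  by (intro eq_matI) auto

lemma mult_inverse_mat_cancel:
  assumes "A \<in> carrier_mat n n" "B \<in> carrier_mat n n" "A * B = 1\<^sub>m n" "X \<in> carrier_mat n k"
  shows "A * (B * X) = (X :: 'c :: semiring_1 mat)"
proof -
  have "A * (B * X) = (A * B) * X" using assoc_mult_mat[OF assms(1,2,4)] by (rule sym)
  then show ?thesis using assms by simp
qed

text \<open>The library's associativity and scalar laws have carrier conditions with intermediate
  dimensions that the simplifier cannot guess. In these square versions all dimensions are a single
  n, which is instantiated explicitly, as in square_mat_simps[where n = d].\<close>

lemma square_mat_mult_carrier:
    "A \<in> carrier_mat n n \<Longrightarrow> B \<in> carrier_mat n n \<Longrightarrow> A * (B :: 'c :: comm_ring_1 mat) \<in> carrier_mat n n"
  and square_mat_mult_assoc: "A \<in> carrier_mat n n \<Longrightarrow> B \<in> carrier_mat n n \<Longrightarrow> C \<in> carrier_mat n n \<Longrightarrow>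
    A * B * C = A * (B * (C :: 'c :: comm_ring_1 mat))"
  and square_mat_smult_mult: "A \<in> carrier_mat n n \<Longrightarrow> B \<in> carrier_mat n n \<Longrightarrow>
    (k \<cdot>\<^sub>m A) * B = k \<cdot>\<^sub>m (A * (B :: 'c :: comm_ring_1 mat))"
  and square_mat_mult_smult: "A \<in> carrier_mat n n \<Longrightarrow> B \<in> carrier_mat n n \<Longrightarrow>
    A * (k \<cdot>\<^sub>m B) = k \<cdot>\<^sub>m (A * (B :: 'c :: comm_ring_1 mat))"
  and square_mat_mult_one: "A \<in> carrier_mat n n \<Longrightarrow> A * 1\<^sub>m n = (A :: 'c :: comm_ring_1 mat)"
  and square_mat_one_mult: "A \<in> carrier_mat n n \<Longrightarrow> 1\<^sub>m n * A = (A :: 'c :: comm_ring_1 mat)"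
  by (auto simp: mult_smult_assoc_mat mult_smult_distrib)

lemmas square_mat_simps =
  square_mat_mult_carrier square_mat_mult_assoc square_mat_smult_mult square_mat_mult_smult square_mat_mult_one
  square_mat_one_mult

lemma conj_mat_cancel:
  assumes L: "L \<in> carrier_mat n n" "L' \<in> carrier_mat n n" "L * L' = 1\<^sub>m n" and A: "A \<in> carrier_mat n n"
  shows "L * (L' * A * L) * L' = (A :: 'c :: comm_ring_1 mat)"
  using L A by (simp add: square_mat_simps[where n = n] mult_inverse_mat_cancel[OF L])

lemma scalar_mat_conj:
  assumes A: "A = c \<cdot>\<^sub>m 1\<^sub>m n" and A': "A' \<in> carrier_mat n n" "A * A' = 1\<^sub>m n" and X: "X \<in> carrier_mat n n"
  shows "A * X * A' = (X :: 'c :: comm_ring_1 mat)"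
proof -
  have "A * X * A' = c \<cdot>\<^sub>m (X * A')" unfolding A using A'(1) X by (simp add: square_mat_simps[where n = n])
  also have "\<dots> = X * (A * A')" unfolding A using A'(1) X by (simp add: square_mat_simps[where n = n])
  also have "\<dots> = X" using A'(2) X by simp
  finally show ?thesis .
qed

lemma conj_eq_imp_commute:
  assumes A: "A \<in> carrier_mat n n" "A' \<in> carrier_mat n n" "A' * A = 1\<^sub>m n" and X: "X \<in> carrier_mat n n"
    and conj: "A * X * A' = X"
  shows "A * X = (X :: 'c :: comm_ring_1 mat) * A"
proof -
  have "A * X = A * X * (A' * A)" using A X by simp
  also have "\<dots> = (A * X * A') * A" using A X by (simp add: square_mat_simps[where n = n])
  finally show ?thesis using conj by simp
qed

lemma right_invertible_mat_nonzero_entry: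
  assumes "A \<in> carrier_mat n n" "B \<in> carrier_mat n n" "A * B = 1\<^sub>m n" "n > 0"
  shows "\<exists>i<n. \<exists>j<n. A $$ (i, j) \<noteq> (0 :: 'c :: semiring_1)"
proof (rule ccontr)
  assume "\<not> ?thesis"
  then have "(\<Sum>a<n. A $$ (0, a) * B $$ (a, 0)) = 0" using assms(4) by simp
  moreover have "(A * B) $$ (0, 0) = (\<Sum>a<n. A $$ (0, a) * B $$ (a, 0))"
    using assms(1,2,4,4) by (rule index_mult_mat_sum)
  moreover have "(A * B) $$ (0, 0) = 1" using assms by simp
  ultimately show False by simp
qed

lemma smult_right_invertible_mat_cancel:
  assumes "A \<in> carrier_mat n n" "B \<in> carrier_mat n n" "A * B = 1\<^sub>m n" "n > 0"
    and "a \<cdot>\<^sub>m A = b \<cdot>\<^sub>m A"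
  shows "a = (b :: 'c :: field)"
proof -
  obtain i j where "i < n" "j < n" "A $$ (i, j) \<noteq> 0"
    using right_invertible_mat_nonzero_entry[OF assms(1-4)] by blast
  moreover have "(a \<cdot>\<^sub>m A) $$ (i, j) = (b \<cdot>\<^sub>m A) $$ (i, j)" using assms(5) by simp
  ultimately show ?thesis using assms(1) by simp
qed

lemma surj_mat_vec_invertible:
  assumes T: "(T :: 'c :: field mat) \<in> carrier_mat d d"
    and surj: "\<And>w. w \<in> carrier_vec d \<Longrightarrow> \<exists>v\<in>carrier_vec d. T *\<^sub>v v = w"
  shows "\<exists>T'\<in>carrier_mat d d. T * T' = 1\<^sub>m d \<and> T' * T = 1\<^sub>m d"
proof -
  have "\<forall>j\<in>{..<d}. \<exists>v. v \<in> carrier_vec d \<and> T *\<^sub>v v = unit_vec d j"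
    using surj[OF unit_vec_carrier] by blast
  from bchoice[OF this] obtain V
    where V: "\<And>j. j < d \<Longrightarrow> V j \<in> carrier_vec d \<and> T *\<^sub>v V j = unit_vec d j"
    by blast
  define T' where "T' = mat d d (\<lambda>(i, j). V j $ i)"
  have T': "T' \<in> carrier_mat d d" unfolding T'_def by simp
  have "T * T' = 1\<^sub>m d"
  proof (rule eq_matI)
    fix i j assume "i < dim_row (1\<^sub>m d :: 'c mat)" "j < dim_col (1\<^sub>m d :: 'c mat)"
    then have ij: "i < d" "j < d" by auto
    have "col T' j = V j" using V[OF ij(2)] ij(2) unfolding T'_def by (auto intro!: eq_vecI)
    then have "(T * T') $$ (i, j) = (T *\<^sub>v V j) $ i" using T T' ij by simp
    then show "(T * T') $$ (i, j) = 1\<^sub>m d $$ (i, j)" using V[OF ij(2)] ij by simp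
  qed (use T T' in auto)
  with T T' show ?thesis using mat_mult_left_right_inverse by blast
qed

section \<open>The field Q^ab and its endomorphisms\<close>

lemma Qab_is_subfield: "is_subfield_C Qab"
  unfolding is_subfield_C_def Qab_def by auto

lemma Qab_zero [simp]: "0 \<in> Qab"
  and Qab_one [simp]: "1 \<in> Qab"
  and Qab_add [simp]: "a \<in> Qab \<Longrightarrow> b \<in> Qab \<Longrightarrow> a + b \<in> Qab"
  and Qab_mult [simp]: "a \<in> Qab \<Longrightarrow> b \<in> Qab \<Longrightarrow> a * b \<in> Qab"
  using Qab_is_subfield unfolding is_subfield_C_def by auto

lemma Qab_inverse [simp]: "a \<in> Qab \<Longrightarrow> inverse a \<in> Qab"
  using Qab_is_subfield unfolding is_subfield_C_def by (cases "a = 0") auto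

lemma Qab_divide [simp]: "a \<in> Qab \<Longrightarrow> b \<in> Qab \<Longrightarrow> a / b \<in> Qab"
  by (simp add: divide_inverse)

lemma Qab_sum [simp]: "(\<And>x. x \<in> A \<Longrightarrow> f x \<in> Qab) \<Longrightarrow> sum f A \<in> Qab"
  by (induction A rule: infinite_finite_induct) auto

definition Qab_mat :: "complex mat \<Rightarrow> bool" where
  "Qab_mat A \<longleftrightarrow> (\<forall>i<dim_row A. \<forall>j<dim_col A. A $$ (i, j) \<in> Qab)"

lemma Qab_mat_mult [simp]:
  assumes "A \<in> carrier_mat n k" "B \<in> carrier_mat k m" "Qab_mat A" "Qab_mat B"
  shows "Qab_mat (A * B)"
  unfolding Qab_mat_def
proof (intro allI impI)
  fix i j assume "i < dim_row (A * B)" "j < dim_col (A * B)"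
  with assms show "(A * B) $$ (i, j) \<in> Qab"
    by (subst index_mult_mat_sum[of A n k B m]) (auto simp: Qab_mat_def intro!: Qab_sum)
qed

lemma Qab_mat_smult [simp]: "c \<in> Qab \<Longrightarrow> Qab_mat A \<Longrightarrow> Qab_mat (c \<cdot>\<^sub>m A)"
  unfolding Qab_mat_def by auto

lemma Qab_mat_trace: "A \<in> carrier_mat n n \<Longrightarrow> Qab_mat A \<Longrightarrow> mat_trace A \<in> Qab"
  unfolding mat_trace_def Qab_mat_def by (auto intro!: Qab_sum)

text \<open>Elements of Gal(Q^ab/Q), restricted to Q^ab; only injectivity, not surjectivity, is needed.\<close>

locale Qab_endo =
  fixes \<sigma> :: "complex \<Rightarrow> complex"
  assumes closed: "a \<in> Qab \<Longrightarrow> \<sigma> a \<in> Qab"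
    and inj: "inj_on \<sigma> Qab"
    and add: "a \<in> Qab \<Longrightarrow> b \<in> Qab \<Longrightarrow> \<sigma> (a + b) = \<sigma> a + \<sigma> b"
    and mult: "a \<in> Qab \<Longrightarrow> b \<in> Qab \<Longrightarrow> \<sigma> (a * b) = \<sigma> a * \<sigma> b"
begin

lemma eq_iff: "a \<in> Qab \<Longrightarrow> b \<in> Qab \<Longrightarrow> \<sigma> a = \<sigma> b \<longleftrightarrow> a = b"
  using inj by (auto dest: inj_onD)

lemma map_zero [simp]: "\<sigma> 0 = 0"
  using add[of 0 0] by simp

lemma map_eq_zero_iff: "a \<in> Qab \<Longrightarrow> \<sigma> a = 0 \<longleftrightarrow> a = 0"
  using eq_iff[of a 0] by simp

lemma map_one [simp]: "\<sigma> 1 = 1"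
proof -
  have "\<sigma> 1 * \<sigma> 1 = \<sigma> 1 * 1" using mult[of 1 1] by simp
  moreover have "\<sigma> 1 \<noteq> 0" using map_eq_zero_iff[of 1] by simp
  ultimately show ?thesis by (metis mult_left_cancel)
qed

lemma map_sum: "(\<And>x. x \<in> A \<Longrightarrow> f x \<in> Qab) \<Longrightarrow> \<sigma> (sum f A) = (\<Sum>x\<in>A. \<sigma> (f x))"
  by (induction A rule: infinite_finite_induct) (auto simp: add)

lemma map_mat_mult:
  assumes A: "A \<in> carrier_mat n k" and B: "B \<in> carrier_mat k m" and "Qab_mat A" "Qab_mat B"
  shows "map_mat \<sigma> (A * B) = map_mat \<sigma> A * map_mat \<sigma> B"
proof (rule eq_matI)
  fix i j assume "i < dim_row (map_mat \<sigma> A * map_mat \<sigma> B)" "j < dim_col (map_mat \<sigma> A * map_mat \<sigma> B)"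
  with assms have "i < n" "j < m" by auto
  with assms have "map_mat \<sigma> (A * B) $$ (i, j) = \<sigma> ((A * B) $$ (i, j))" by simp
  also have "\<dots> = \<sigma> (\<Sum>a<k. A $$ (i, a) * B $$ (a, j))"
    by (simp only: index_mult_mat_sum[OF A B \<open>i < n\<close> \<open>j < m\<close>])
  also have "\<dots> = (map_mat \<sigma> A * map_mat \<sigma> B) $$ (i, j)"
    using assms \<open>i < n\<close> \<open>j < m\<close>
    by (subst map_sum) (auto simp: index_mult_mat_sum[of _ n k _ m] mult Qab_mat_def simp del: index_mult_mat)
  finally show "map_mat \<sigma> (A * B) $$ (i, j) = (map_mat \<sigma> A * map_mat \<sigma> B) $$ (i, j)" .
qed (use A B in auto)

lemma map_mat_smult: "c \<in> Qab \<Longrightarrow> Qab_mat A \<Longrightarrow> map_mat \<sigma> (c \<cdot>\<^sub>m A) = \<sigma> c \<cdot>\<^sub>m map_mat \<sigma> A"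
  by (intro eq_matI) (auto simp: mult Qab_mat_def)

lemma map_mat_one [simp]: "map_mat \<sigma> (1\<^sub>m n) = 1\<^sub>m n"
  by (intro eq_matI) auto

lemma mat_trace_map_mat:
  "A \<in> carrier_mat n n \<Longrightarrow> Qab_mat A \<Longrightarrow> mat_trace (map_mat \<sigma> A) = \<sigma> (mat_trace A)"
  unfolding mat_trace_def Qab_mat_def by (auto simp: map_sum intro!: map_sum[symmetric])

end

lemma Qab_endo_id: "Qab_endo (\<lambda>z. z)"
  by unfold_locales auto

lemma Qab_endo_HGal: "\<sigma> \<in> HGal p \<Longrightarrow> Qab_endo \<sigma>"
  unfolding HGal_def GalQab_def bij_betw_def by unfold_locales auto

section \<open>Representations of a finite subgroup\<close>

lemma is_rep_carrier: "is_rep G N d \<rho> \<Longrightarrow> n \<in> N \<Longrightarrow> \<rho> n \<in> carrier_mat d d"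
  and is_rep_mult: "is_rep G N d \<rho> \<Longrightarrow> n \<in> N \<Longrightarrow> m \<in> N \<Longrightarrow> \<rho> (n \<otimes>\<^bsub>G\<^esub> m) = \<rho> n * \<rho> m"
  and is_rep_one: "is_rep G N d \<rho> \<Longrightarrow> \<rho> \<one>\<^bsub>G\<^esub> = 1\<^sub>m d"
  unfolding is_rep_def by auto

lemma commuting_eigenspace_invariant:
  assumes \<rho>: "is_rep G N d \<rho>" and A: "A \<in> carrier_mat d d" and comm: "\<forall>n\<in>N. A * \<rho> n = \<rho> n * A"
  shows "invariant_subspace N d \<rho> {w \<in> carrier_vec d. A *\<^sub>v w = c \<cdot>\<^sub>v w}"
  unfolding invariant_subspace_def
proof (intro conjI ballI allI)
  show "0\<^sub>v d \<in> {w \<in> carrier_vec d. A *\<^sub>v w = c \<cdot>\<^sub>v w}" using A by auto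
next
  fix u w assume "u \<in> {w \<in> carrier_vec d. A *\<^sub>v w = c \<cdot>\<^sub>v w}" "w \<in> {w \<in> carrier_vec d. A *\<^sub>v w = c \<cdot>\<^sub>v w}"
  then show "u + w \<in> {w \<in> carrier_vec d. A *\<^sub>v w = c \<cdot>\<^sub>v w}"
    using A by (auto simp: mult_add_distrib_mat_vec smult_add_distrib_vec)
next
  fix k w assume "w \<in> {w \<in> carrier_vec d. A *\<^sub>v w = c \<cdot>\<^sub>v w}"
  then show "k \<cdot>\<^sub>v w \<in> {w \<in> carrier_vec d. A *\<^sub>v w = c \<cdot>\<^sub>v w}"
    using A by (auto simp: mult_mat_vec smult_smult_assoc mult.commute)
next
  fix n w assume n: "n \<in> N" and "w \<in> {w \<in> carrier_vec d. A *\<^sub>v w = c \<cdot>\<^sub>v w}"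
  then have w: "w \<in> carrier_vec d" "A *\<^sub>v w = c \<cdot>\<^sub>v w" by auto
  have \<rho>n: "\<rho> n \<in> carrier_mat d d" using is_rep_carrier[OF \<rho> n] .
  have "A *\<^sub>v (\<rho> n *\<^sub>v w) = (A * \<rho> n) *\<^sub>v w" using A \<rho>n w by simp
  also have "\<dots> = (\<rho> n * A) *\<^sub>v w" using comm n by simp
  also have "\<dots> = \<rho> n *\<^sub>v (A *\<^sub>v w)" using A \<rho>n w by simp
  also have "\<dots> = c \<cdot>\<^sub>v (\<rho> n *\<^sub>v w)" using w \<rho>n by (auto simp: mult_mat_vec)
  finally show "\<rho> n *\<^sub>v w \<in> {w \<in> carrier_vec d. A *\<^sub>v w = c \<cdot>\<^sub>v w}" using \<rho>n w by auto
qed auto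

lemma irr_rep_commutant_scalar:
  assumes irr: "irr_rep G N d \<rho>" and A: "A \<in> carrier_mat d d"
    and comm: "\<forall>n\<in>N. A * \<rho> n = \<rho> n * A"
  shows "\<exists>c. A = c \<cdot>\<^sub>m 1\<^sub>m d"
proof -
  have rep: "is_rep G N d \<rho>" and "d > 0" using irr unfolding irr_rep_def by auto
  obtain c where "c \<in> spectrum A" using spectrum_non_empty[OF A \<open>d > 0\<close>] by auto
  then obtain v where v: "v \<in> carrier_vec d" "v \<noteq> 0\<^sub>v d" "A *\<^sub>v v = c \<cdot>\<^sub>v v"
    unfolding spectrum_def eigenvalue_def eigenvector_def using A by auto
  define W where "W = {w \<in> carrier_vec d. A *\<^sub>v w = c \<cdot>\<^sub>v w}"
  have "W = {0\<^sub>v d} \<or> W = carrier_vec d"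
    using irr commuting_eigenspace_invariant[OF rep A comm] unfolding irr_rep_def W_def by blast
  moreover have "v \<in> W" unfolding W_def using v by auto
  ultimately have W: "W = carrier_vec d" using v by auto
  have "A = c \<cdot>\<^sub>m 1\<^sub>m d"
  proof (rule eq_matI)
    fix i j assume "i < dim_row (c \<cdot>\<^sub>m 1\<^sub>m d)" "j < dim_col (c \<cdot>\<^sub>m 1\<^sub>m d)"
    then have ij: "i < d" "j < d" by auto
    have "unit_vec d j \<in> W" using W by simp
    then have "A *\<^sub>v unit_vec d j = c \<cdot>\<^sub>v unit_vec d j" unfolding W_def by simp
    then have "(A *\<^sub>v unit_vec d j) $ i = (c \<cdot>\<^sub>v unit_vec d j) $ i" by (rule arg_cong)
    then show "A $$ (i, j) = (c \<cdot>\<^sub>m 1\<^sub>m d) $$ (i, j)"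
      using A ij by simp
  qed (use A in auto)
  then show ?thesis by blast
qed

definition similar_reps :: "'a set \<Rightarrow> nat \<Rightarrow> ('a \<Rightarrow> complex mat) \<Rightarrow> ('a \<Rightarrow> complex mat) \<Rightarrow> bool" where
  "similar_reps N d \<rho> \<tau> \<longleftrightarrow> (\<exists>T\<in>carrier_mat d d. \<exists>T'\<in>carrier_mat d d.
     T * T' = 1\<^sub>m d \<and> T' * T = 1\<^sub>m d \<and> (\<forall>n\<in>N. \<tau> n = T' * \<rho> n * T))"

lemma invariant_subspace_carrier_vec: "is_rep G N d \<tau> \<Longrightarrow> invariant_subspace N d \<tau> (carrier_vec d)"
  unfolding invariant_subspace_def by (auto dest: is_rep_carrier)

lemma invariant_subspaceD:
  assumes "invariant_subspace N d \<tau> W"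
  shows "W \<subseteq> carrier_vec d" "0\<^sub>v d \<in> W" "v \<in> W \<Longrightarrow> w \<in> W \<Longrightarrow> v + w \<in> W"
    "v \<in> W \<Longrightarrow> c \<cdot>\<^sub>v v \<in> W" "n \<in> N \<Longrightarrow> v \<in> W \<Longrightarrow> \<tau> n *\<^sub>v v \<in> W"
  using assms unfolding invariant_subspace_def by blast+

lemma intertwiner_image_invariant:
  assumes \<rho>: "is_rep G N d \<rho>" and \<tau>: "is_rep G N d \<tau>" and W: "invariant_subspace N d \<tau> W"
    and T: "T \<in> carrier_mat d d" and intertwines: "\<forall>n\<in>N. \<rho> n * T = T * \<tau> n"
  shows "invariant_subspace N d \<rho> ((*\<^sub>v) T ` W)"
proof -
  have W_carrier: "v \<in> carrier_vec d" if "v \<in> W" for v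
    using invariant_subspaceD(1)[OF W] that by blast
  show ?thesis
    unfolding invariant_subspace_def
  proof (intro conjI ballI allI)
    show "(*\<^sub>v) T ` W \<subseteq> carrier_vec d"
    proof (rule image_subsetI)
      fix v assume "v \<in> W"
      then show "T *\<^sub>v v \<in> carrier_vec d" using T W_carrier[of v] by simp
    qed
    have "T *\<^sub>v 0\<^sub>v d = 0\<^sub>v d" using T by auto
    then show "0\<^sub>v d \<in> (*\<^sub>v) T ` W" using invariant_subspaceD(2)[OF W] by (metis image_eqI)
  next
    fix u v assume "u \<in> (*\<^sub>v) T ` W" "v \<in> (*\<^sub>v) T ` W"
    then obtain u' v' where uv: "u' \<in> W" "v' \<in> W" "u = T *\<^sub>v u'" "v = T *\<^sub>v v'" by blast
    then have "u + v = T *\<^sub>v (u' + v')" using T W_carrier by (simp add: mult_add_distrib_mat_vec)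
    then show "u + v \<in> (*\<^sub>v) T ` W" using invariant_subspaceD(3)[OF W uv(1,2)] by simp
  next
    fix c v assume "v \<in> (*\<^sub>v) T ` W"
    then obtain v' where v': "v' \<in> W" "v = T *\<^sub>v v'" by blast
    then have "c \<cdot>\<^sub>v v = T *\<^sub>v (c \<cdot>\<^sub>v v')" using T W_carrier by (simp add: mult_mat_vec)
    then show "c \<cdot>\<^sub>v v \<in> (*\<^sub>v) T ` W" using invariant_subspaceD(4)[OF W v'(1)] by simp
  next
    fix n v assume n: "n \<in> N" and "v \<in> (*\<^sub>v) T ` W"
    then obtain v' where v': "v' \<in> W" "v = T *\<^sub>v v'" by blast
    have \<rho>n: "\<rho> n \<in> carrier_mat d d" and \<tau>n: "\<tau> n \<in> carrier_mat d d"
      using is_rep_carrier[OF \<rho> n] is_rep_carrier[OF \<tau> n] .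
    have "\<rho> n *\<^sub>v v = (\<rho> n * T) *\<^sub>v v'" using v' W_carrier T \<rho>n by simp
    also have "\<dots> = (T * \<tau> n) *\<^sub>v v'" using intertwines n by simp
    also have "\<dots> = T *\<^sub>v (\<tau> n *\<^sub>v v')" using v' W_carrier T \<tau>n by simp
    finally show "\<rho> n *\<^sub>v v \<in> (*\<^sub>v) T ` W" using invariant_subspaceD(5)[OF W n v'(1)] by simp
  qed
qed

lemma irr_rep_intertwiner_invertible:
  assumes irr: "irr_rep G N d \<rho>" and \<tau>: "is_rep G N d \<tau>" and T: "T \<in> carrier_mat d d"
    and nonzero: "i < d" "j < d" "T $$ (i, j) \<noteq> 0"
    and intertwines: "\<forall>n\<in>N. \<rho> n * T = T * \<tau> n"
  shows "\<exists>T'\<in>carrier_mat d d. T * T' = 1\<^sub>m d \<and> T' * T = 1\<^sub>m d"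
proof (rule surj_mat_vec_invertible[OF T])
  have \<rho>: "is_rep G N d \<rho>" using irr unfolding irr_rep_def by blast
  have "invariant_subspace N d \<rho> ((*\<^sub>v) T ` carrier_vec d)"
    using intertwiner_image_invariant[OF \<rho> \<tau> invariant_subspace_carrier_vec[OF \<tau>] T intertwines] .
  then have "(*\<^sub>v) T ` carrier_vec d = {0\<^sub>v d} \<or> (*\<^sub>v) T ` carrier_vec d = carrier_vec d"
    using irr unfolding irr_rep_def by blast
  moreover have "(T *\<^sub>v unit_vec d j) $ i \<noteq> 0" using T nonzero by simp
  then have "T *\<^sub>v unit_vec d j \<noteq> 0\<^sub>v d" using nonzero by auto
  moreover have "T *\<^sub>v unit_vec d j \<in> (*\<^sub>v) T ` carrier_vec d" by simp
  ultimately have full: "(*\<^sub>v) T ` carrier_vec d = carrier_vec d" by blast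
  show "\<exists>v\<in>carrier_vec d. T *\<^sub>v v = w" if "w \<in> carrier_vec d" for w
  proof -
    have "w \<in> (*\<^sub>v) T ` carrier_vec d" using that full by simp
    then show ?thesis by (auto simp: image_iff)
  qed
qed

lemma image_mat_vec_trivial_imp_trivial:
  assumes T: "(T :: 'c :: field mat) \<in> carrier_mat d d" "T' \<in> carrier_mat d d" "T' * T = 1\<^sub>m d"
    and W: "W \<subseteq> carrier_vec d"
    and image: "(*\<^sub>v) T ` W = {0\<^sub>v d} \<or> (*\<^sub>v) T ` W = carrier_vec d"
  shows "W = {0\<^sub>v d} \<or> W = carrier_vec d"
proof -
  have T_cancel: "T' *\<^sub>v (T *\<^sub>v v) = v" if "v \<in> carrier_vec d" for v
  proof -
    have "T' *\<^sub>v (T *\<^sub>v v) = (T' * T) *\<^sub>v v"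
      by (rule assoc_mult_mat_vec[symmetric, OF T(2) T(1) that])
    also have "\<dots> = v" using that T(3) by simp
    finally show ?thesis .
  qed
  from image show ?thesis
  proof
    assume zero: "(*\<^sub>v) T ` W = {0\<^sub>v d}"
    have "w = 0\<^sub>v d" if "w \<in> W" for w
    proof -
      have "T *\<^sub>v w = 0\<^sub>v d" using zero that by (metis imageI singletonD)
      moreover have "T' *\<^sub>v 0\<^sub>v d = 0\<^sub>v d" using T(2) by auto
      ultimately show ?thesis using T_cancel[OF subsetD[OF W that]] by simp
    qed
    then have "W \<subseteq> {0\<^sub>v d}" by blast
    moreover have "W \<noteq> {}" using zero by auto
    ultimately show ?thesis using subset_singletonD by metis
  next
    assume full: "(*\<^sub>v) T ` W = carrier_vec d"
    have "v \<in> W" if v: "v \<in> carrier_vec d" for v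
    proof -
      have "T *\<^sub>v v \<in> (*\<^sub>v) T ` W" using full v T by simp
      then obtain w where "w \<in> W" "T *\<^sub>v w = T *\<^sub>v v" by auto
      then show ?thesis using T_cancel[of v] T_cancel[of w] v W by auto
    qed
    then have "carrier_vec d \<subseteq> W" by blast
    then show ?thesis using W by (simp add: subset_antisym)
  qed
qed

lemma irr_rep_similar:
  assumes irr: "irr_rep G N d \<rho>" and \<tau>: "is_rep G N d \<tau>" and sim: "similar_reps N d \<rho> \<tau>"
  shows "irr_rep G N d \<tau>"
proof -
  have \<rho>: "is_rep G N d \<rho>" and "d > 0" using irr unfolding irr_rep_def by auto
  obtain T T' where T: "T \<in> carrier_mat d d" "T' \<in> carrier_mat d d" "T * T' = 1\<^sub>m d" "T' * T = 1\<^sub>m d"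
    and \<tau>_eq: "\<forall>n\<in>N. \<tau> n = T' * \<rho> n * T"
    using sim unfolding similar_reps_def by blast
  have "\<rho> n * T = T * \<tau> n" if "n \<in> N" for n
    using \<tau>_eq that T is_rep_carrier[OF \<rho> that] mult_inverse_mat_cancel[OF T(1,2,3), of "\<rho> n * T" d]
    by simp
  then have intertwines: "\<forall>n\<in>N. \<rho> n * T = T * \<tau> n" by blast
  have "W = {0\<^sub>v d} \<or> W = carrier_vec d" if W: "invariant_subspace N d \<tau> W" for W
  proof (rule image_mat_vec_trivial_imp_trivial[OF T(1,2,4) invariant_subspaceD(1)[OF W]])
    show "(*\<^sub>v) T ` W = {0\<^sub>v d} \<or> (*\<^sub>v) T ` W = carrier_vec d"
      using irr intertwiner_image_invariant[OF \<rho> \<tau> W T(1) intertwines] unfolding irr_rep_def by blast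
  qed
  with \<tau> \<open>d > 0\<close> show ?thesis unfolding irr_rep_def by blast
qed

lemma is_rep_mult_index:
  assumes \<rho>: "is_rep G N d \<rho>" and "n \<in> N" "m \<in> N" "i < d" "j < d"
  shows "(\<Sum>a<d. \<rho> n $$ (i, a) * \<rho> m $$ (a, j)) = \<rho> (n \<otimes>\<^bsub>G\<^esub> m) $$ (i, j)"
  using assms is_rep_mult[OF \<rho>] is_rep_carrier[OF \<rho>]
  by (simp add: index_mult_mat_sum[of _ d d _ d] del: index_mult_mat)

lemma (in group) is_rep_inv:
  assumes N: "subgroup N G" and \<rho>: "is_rep G N d \<rho>" and n: "n \<in> N"
  shows "\<rho> (inv n) * \<rho> n = 1\<^sub>m d"
proof -
  have "\<rho> (inv n) * \<rho> n = \<rho> (inv n \<otimes> n)"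
    using is_rep_mult[OF \<rho> subgroup.m_inv_closed[OF N n] n] by simp
  also have "\<dots> = 1\<^sub>m d" using is_rep_one[OF \<rho>] subgroup.mem_carrier[OF N n] by simp
  finally show ?thesis .
qed

locale finite_subgroup = group G + subgroup N G for G (structure) and N +
  assumes finite_subgroup: "finite N"
begin

lemma subgroup_one: "\<one> \<in> N"
  by (rule subgroup.one_closed[OF subgroup_axioms])

lemma card_subgroup_pos: "card N > 0"
  using finite_subgroup subgroup_one card_gt_0_iff by blast

lemma sum_translate: "m \<in> N \<Longrightarrow> (\<Sum>n\<in>N. f (m \<otimes> n)) = (\<Sum>n\<in>N. f n)"
  by (rule sum.reindex_bij_witness[where i = "\<lambda>n. inv m \<otimes> n" and j = "\<lambda>n. m \<otimes> n"])
    (auto simp: m_assoc[symmetric])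

text \<open>The (unnormalised) average of rho(n) E_jk tau(n^-1) over n in N, with E_jk the matrix unit.\<close>

definition avg_intertwiner ::
    "('a \<Rightarrow> complex mat) \<Rightarrow> ('a \<Rightarrow> complex mat) \<Rightarrow> nat \<Rightarrow> nat \<Rightarrow> nat \<Rightarrow> complex mat" where
  "avg_intertwiner \<rho> \<tau> d j k = mat d d (\<lambda>(i, l). \<Sum>n\<in>N. \<rho> n $$ (i, j) * \<tau> (inv n) $$ (k, l))"

lemma avg_intertwiner_carrier: "avg_intertwiner \<rho> \<tau> d j k \<in> carrier_mat d d"
  unfolding avg_intertwiner_def by simp

lemma avg_intertwiner_index:
  "i < d \<Longrightarrow> l < d \<Longrightarrow> avg_intertwiner \<rho> \<tau> d j k $$ (i, l) = (\<Sum>n\<in>N. \<rho> n $$ (i, j) * \<tau> (inv n) $$ (k, l))"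
  unfolding avg_intertwiner_def by simp

lemma avg_intertwiner_intertwines:
  assumes \<rho>: "is_rep G N d \<rho>" and \<tau>: "is_rep G N d \<tau>" and m: "m \<in> N" and jk: "j < d" "k < d"
  shows "\<rho> m * avg_intertwiner \<rho> \<tau> d j k = avg_intertwiner \<rho> \<tau> d j k * \<tau> m"
proof (rule eq_matI)
  let ?T = "avg_intertwiner \<rho> \<tau> d j k"
  have \<rho>m: "\<rho> m \<in> carrier_mat d d" and \<tau>m: "\<tau> m \<in> carrier_mat d d"
    using is_rep_carrier[OF \<rho> m] is_rep_carrier[OF \<tau> m] .
  fix i l assume "i < dim_row (?T * \<tau> m)" "l < dim_col (?T * \<tau> m)"
  then have il: "i < d" "l < d" using \<tau>m by (auto simp: avg_intertwiner_def)
  have "(\<rho> m * ?T) $$ (i, l) = (\<Sum>a<d. \<rho> m $$ (i, a) * (\<Sum>n\<in>N. \<rho> n $$ (a, j) * \<tau> (inv n) $$ (k, l)))"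
    using \<rho>m il by (simp add: index_mult_mat_sum[OF \<rho>m avg_intertwiner_carrier] avg_intertwiner_index
        del: index_mult_mat)
  also have "\<dots> = (\<Sum>n\<in>N. (\<Sum>a<d. \<rho> m $$ (i, a) * \<rho> n $$ (a, j)) * \<tau> (inv n) $$ (k, l))"
    unfolding sum_distrib_left sum_distrib_right mult.assoc by (rule sum.swap)
  also have "\<dots> = (\<Sum>n\<in>N. \<rho> (m \<otimes> n) $$ (i, j) * \<tau> (inv n) $$ (k, l))"
    using is_rep_mult_index[OF \<rho> m _ il(1) jk(1)] by simp
  also have "\<dots> = (\<Sum>n\<in>N. \<rho> (m \<otimes> (inv m \<otimes> n)) $$ (i, j) * \<tau> (inv (inv m \<otimes> n)) $$ (k, l))"
    using sum_translate[of "inv m" "\<lambda>n. \<rho> (m \<otimes> n) $$ (i, j) * \<tau> (inv n) $$ (k, l)"] m by simp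
  also have "\<dots> = (\<Sum>n\<in>N. \<rho> n $$ (i, j) * \<tau> (inv n \<otimes> m) $$ (k, l))"
    using m by (intro sum.cong) (auto simp: m_assoc[symmetric] inv_mult_group)
  also have "\<dots> = (\<Sum>n\<in>N. \<rho> n $$ (i, j) * (\<Sum>b<d. \<tau> (inv n) $$ (k, b) * \<tau> m $$ (b, l)))"
    using is_rep_mult_index[OF \<tau> m_inv_closed _ jk(2) il(2)] m by simp
  also have "\<dots> = (\<Sum>b<d. (\<Sum>n\<in>N. \<rho> n $$ (i, j) * \<tau> (inv n) $$ (k, b)) * \<tau> m $$ (b, l))"
    unfolding sum_distrib_left sum_distrib_right mult.assoc by (rule sum.swap)
  also have "\<dots> = (\<Sum>b<d. ?T $$ (i, b) * \<tau> m $$ (b, l))"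
    using il by (simp add: avg_intertwiner_index)
  also have "\<dots> = (?T * \<tau> m) $$ (i, l)"
    using il by (simp add: index_mult_mat_sum[OF avg_intertwiner_carrier \<tau>m] del: index_mult_mat)
  finally show "(\<rho> m * ?T) $$ (i, l) = (?T * \<tau> m) $$ (i, l)" .
qed (use is_rep_carrier[OF \<rho> m] is_rep_carrier[OF \<tau> m] in \<open>auto simp: avg_intertwiner_def\<close>)

lemma sum_mat_trace_product:
  assumes \<rho>: "is_rep G N d \<rho>" and \<tau>: "is_rep G N d \<tau>"
  shows "(\<Sum>n\<in>N. mat_trace (\<rho> n) * mat_trace (\<tau> (inv n))) = (\<Sum>i<d. \<Sum>j<d. avg_intertwiner \<rho> \<tau> d i j $$ (i, j))"
proof -
  have trace: "mat_trace (\<sigma> n) = (\<Sum>i<d. \<sigma> n $$ (i, i))" if "is_rep G N d \<sigma>" "n \<in> N" for \<sigma> n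
    using is_rep_carrier[OF that] unfolding mat_trace_def by simp
  have "(\<Sum>n\<in>N. mat_trace (\<rho> n) * mat_trace (\<tau> (inv n)))
      = (\<Sum>n\<in>N. \<Sum>i<d. \<Sum>j<d. \<rho> n $$ (i, i) * \<tau> (inv n) $$ (j, j))"
    by (intro sum.cong refl) (simp add: trace[OF \<rho>] trace[OF \<tau> m_inv_closed] sum_product)
  also have "\<dots> = (\<Sum>i<d. \<Sum>j<d. \<Sum>n\<in>N. \<rho> n $$ (i, i) * \<tau> (inv n) $$ (j, j))"
    by (subst sum.swap) (simp only: sum.swap[of _ N])
  also have "\<dots> = (\<Sum>i<d. \<Sum>j<d. avg_intertwiner \<rho> \<tau> d i j $$ (i, j))"
    by (simp add: avg_intertwiner_index)
  finally show ?thesis .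
qed

lemma irr_rep_orthogonality:
  assumes irr: "irr_rep G N d \<rho>" and jk: "j < d" "k < d" and il: "i < d" "l < d"
  shows "avg_intertwiner \<rho> \<rho> d j k $$ (i, l) = (if i = l \<and> j = k then of_nat (card N) / of_nat d else 0)"
proof -
  let ?T = "avg_intertwiner \<rho> \<rho> d j k"
  have \<rho>: "is_rep G N d \<rho>" and "d > 0" using irr unfolding irr_rep_def by auto
  have "\<forall>n\<in>N. ?T * \<rho> n = \<rho> n * ?T" using avg_intertwiner_intertwines[OF \<rho> \<rho> _ jk] by simp
  then obtain c where c: "?T = c \<cdot>\<^sub>m 1\<^sub>m d"
    using irr_rep_commutant_scalar[OF irr avg_intertwiner_carrier] by blast
  then have T_index: "?T $$ (a, b) = (if a = b then c else 0)" if "a < d" "b < d" for a b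
    using that by simp
  have "of_nat d * c = (\<Sum>a<d. ?T $$ (a, a))" using T_index by simp
  also have "\<dots> = (\<Sum>n\<in>N. \<Sum>a<d. \<rho> (inv n) $$ (k, a) * \<rho> n $$ (a, j))"
    by (simp add: avg_intertwiner_index mult.commute flip: sum.swap[of _ N])
  also have "\<dots> = (\<Sum>n\<in>N. (\<rho> (inv n) * \<rho> n) $$ (k, j))"
    using is_rep_carrier[OF \<rho>] m_inv_closed jk
    by (intro sum.cong refl) (simp add: index_mult_mat_sum[of _ d d _ d] del: index_mult_mat)
  also have "\<dots> = of_nat (card N) * (if k = j then 1 else 0)"
    using is_rep_inv[OF subgroup_axioms \<rho>] jk by simp
  finally have "c = of_nat (card N) * (if k = j then 1 else 0) / of_nat d"
    using \<open>d > 0\<close> by (simp add: field_simps)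
  then show ?thesis using T_index[OF il] by auto
qed

lemma irr_char_norm:
  assumes irr: "irr_rep G N d \<rho>"
  shows "(\<Sum>n\<in>N. mat_trace (\<rho> n) * mat_trace (\<rho> (inv n))) = of_nat (card N)"
proof -
  have \<rho>: "is_rep G N d \<rho>" and "d > 0" using irr unfolding irr_rep_def by auto
  have "(\<Sum>n\<in>N. mat_trace (\<rho> n) * mat_trace (\<rho> (inv n)))
      = (\<Sum>i<d. \<Sum>j<d. if i = j then of_nat (card N) / of_nat d else 0)"
    using irr_rep_orthogonality[OF irr] by (simp add: sum_mat_trace_product[OF \<rho> \<rho>])
  also have "\<dots> = of_nat (card N)" using \<open>d > 0\<close> by simp
  finally show ?thesis .
qed

lemma same_character_similar:
  assumes irr: "irr_rep G N d \<rho>" and \<tau>: "is_rep G N d' \<tau>"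
    and character: "\<forall>n\<in>N. mat_trace (\<tau> n) = mat_trace (\<rho> n)"
  shows "d' = d \<and> similar_reps N d \<rho> \<tau>"
proof
  have \<rho>: "is_rep G N d \<rho>" using irr unfolding irr_rep_def by blast
  have "mat_trace (\<tau> \<one>) = mat_trace (\<rho> \<one>)" using character subgroup_one by blast
  then show "d' = d" using is_rep_one[OF \<rho>] is_rep_one[OF \<tau>] by simp
  with \<tau> have \<tau>: "is_rep G N d \<tau>" by simp
  have "(\<Sum>i<d. \<Sum>j<d. avg_intertwiner \<rho> \<tau> d i j $$ (i, j))
      = (\<Sum>n\<in>N. mat_trace (\<rho> n) * mat_trace (\<rho> (inv n)))"
    using character m_inv_closed by (simp add: sum_mat_trace_product[OF \<rho> \<tau>, symmetric])
  also have "\<dots> = of_nat (card N)" by (rule irr_char_norm[OF irr])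
  also have "\<dots> \<noteq> 0" using card_subgroup_pos by simp
  finally obtain i j where ij: "i < d" "j < d" "avg_intertwiner \<rho> \<tau> d i j $$ (i, j) \<noteq> 0"
    by (elim sum.not_neutral_contains_not_neutral) simp
  let ?T = "avg_intertwiner \<rho> \<tau> d i j"
  have intertwines: "\<forall>n\<in>N. \<rho> n * ?T = ?T * \<tau> n"
    using avg_intertwiner_intertwines[OF \<rho> \<tau> _ ij(1,2)] by blast
  then obtain T' where T': "T' \<in> carrier_mat d d" "?T * T' = 1\<^sub>m d" "T' * ?T = 1\<^sub>m d"
    using irr_rep_intertwiner_invertible[OF irr \<tau> avg_intertwiner_carrier ij] by blast
  have "\<tau> n = T' * \<rho> n * ?T" if "n \<in> N" for n
  proof -
    have "T' * \<rho> n * ?T = T' * (\<rho> n * ?T)"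
      using T'(1) is_rep_carrier[OF \<rho> that] avg_intertwiner_carrier by (rule assoc_mult_mat)
    also have "\<dots> = T' * (?T * \<tau> n)" using intertwines that by simp
    finally show ?thesis
      using mult_inverse_mat_cancel[OF T'(1) avg_intertwiner_carrier T'(3) is_rep_carrier[OF \<tau> that]]
      by simp
  qed
  with T' show "similar_reps N d \<rho> \<tau>"
    unfolding similar_reps_def by (intro bexI[of _ ?T] bexI[of _ T'] conjI ballI avg_intertwiner_carrier) auto
qed

end

section \<open>Inertia groups\<close>

lemma (in group) mult_inv_cancel_left [simp]:
  "x \<in> carrier G \<Longrightarrow> y \<in> carrier G \<Longrightarrow> x \<otimes> (inv x \<otimes> y) = y"
  by (simp flip: m_assoc)

lemma (in group) inv_mult_cancel_left [simp]:
  "x \<in> carrier G \<Longrightarrow> y \<in> carrier G \<Longrightarrow> inv x \<otimes> (x \<otimes> y) = y"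
  by (simp flip: m_assoc)

lemma (in group) conj_mult:
  "x \<in> carrier G \<Longrightarrow> y \<in> carrier G \<Longrightarrow> n \<in> carrier G \<Longrightarrow>
    x \<otimes> y \<otimes> n \<otimes> inv (x \<otimes> y) = x \<otimes> (y \<otimes> n \<otimes> inv y) \<otimes> inv x"
  by (simp add: m_assoc inv_mult_group)

lemma stab_iff: "g \<in> stab G N \<theta> \<longleftrightarrow> g \<in> carrier G \<and> (\<forall>n\<in>N. \<theta> (g \<otimes>\<^bsub>G\<^esub> n \<otimes>\<^bsub>G\<^esub> inv\<^bsub>G\<^esub> g) = \<theta> n)"
  unfolding stab_def fixes_char_def by simp

context normal
begin

lemma stab_subgroup: "subgroup (stab G H \<theta>) G"
proof (rule subgroupI)
  show "stab G H \<theta> \<subseteq> carrier G" unfolding stab_def by blast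
  show "stab G H \<theta> \<noteq> {}" using one_closed by (force simp: stab_iff)
next
  fix g h assume g: "g \<in> stab G H \<theta>" and h: "h \<in> stab G H \<theta>"
  then have "\<theta> (g \<otimes> (h \<otimes> n \<otimes> inv h) \<otimes> inv g) = \<theta> n" if "n \<in> H" for n
    using that inv_op_closed2 by (simp add: stab_iff)
  then show "g \<otimes> h \<in> stab G H \<theta>" using g h by (simp add: stab_iff conj_mult)
next
  fix g assume g: "g \<in> stab G H \<theta>"
  then have gG: "g \<in> carrier G" by (simp add: stab_iff)
  have "\<theta> (inv g \<otimes> n \<otimes> inv (inv g)) = \<theta> n" if "n \<in> H" for n
  proof -
    have "inv g \<otimes> n \<otimes> g \<in> H" using inv_op_closed1 gG that by blast
    moreover have "g \<otimes> (inv g \<otimes> n \<otimes> g) \<otimes> inv g = n" using gG that by (simp add: m_assoc)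
    ultimately show ?thesis using g gG by (force simp: stab_iff)
  qed
  with gG show "inv g \<in> stab G H \<theta>" by (simp add: stab_iff)
qed

lemma character_subset_stab:
  assumes \<rho>: "is_rep G H d \<rho>" and \<theta>: "\<forall>n\<in>H. \<theta> n = mat_trace (\<rho> n)"
  shows "H \<subseteq> stab G H \<theta>"
proof
  fix m assume m: "m \<in> H"
  have "\<theta> (m \<otimes> n \<otimes> inv m) = \<theta> n" if n: "n \<in> H" for n
  proof -
    have carrier: "\<rho> m \<in> carrier_mat d d" "\<rho> n \<in> carrier_mat d d" "\<rho> (inv m) \<in> carrier_mat d d"
      using is_rep_carrier[OF \<rho>] m n by auto
    have "\<rho> (m \<otimes> n \<otimes> inv m) = \<rho> m * \<rho> n * \<rho> (inv m)"
      using is_rep_mult[OF \<rho>] m n by simp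
    then have "mat_trace (\<rho> (m \<otimes> n \<otimes> inv m)) = mat_trace (\<rho> (inv m) * \<rho> m * \<rho> n)"
      using carrier mat_trace_mult_comm[of "\<rho> m * \<rho> n" d "\<rho> (inv m)"] by simp
    also have "\<rho> (inv m) * \<rho> m = 1\<^sub>m d"
      using is_rep_inv[OF subgroup_axioms \<rho> m] .
    finally show ?thesis using \<theta> m n carrier by simp
  qed
  then show "m \<in> stab G H \<theta>" using m by (simp add: stab_iff)
qed

lemma fixes_charD: "fixes_char G H \<theta> x \<sigma> \<Longrightarrow> n \<in> H \<Longrightarrow> \<sigma> (\<theta> (x \<otimes> n \<otimes> inv x)) = \<theta> n"
  unfolding fixes_char_def by blast

lemma fixes_char_stab_mult:
  assumes t: "t \<in> stab G H \<theta>" and x: "x \<in> carrier G" and tx_fixes: "fixes_char G H \<theta> (t \<otimes> x) \<sigma>"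
  shows "fixes_char G H \<theta> x \<sigma>"
  unfolding fixes_char_def
proof
  fix n assume n: "n \<in> H"
  have "\<theta> (t \<otimes> (x \<otimes> n \<otimes> inv x) \<otimes> inv t) = \<theta> (x \<otimes> n \<otimes> inv x)"
    using t x n inv_op_closed2 by (simp add: stab_iff)
  then show "\<sigma> (\<theta> (x \<otimes> n \<otimes> inv x)) = \<theta> n"
    using fixes_charD[OF tx_fixes n] t x n by (simp add: stab_iff conj_mult)
qed

lemma fixes_char_inv_conj_stab:
  assumes x: "x \<in> carrier G" and x_fixes: "fixes_char G H \<theta> x \<sigma>" and y: "y \<in> stab G H \<theta>"
  shows "inv x \<otimes> y \<otimes> x \<in> stab G H \<theta>"
proof -
  let ?w = "inv x \<otimes> y \<otimes> x"
  have yG: "y \<in> carrier G" and wG: "?w \<in> carrier G" using x y by (auto simp: stab_iff)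
  have "\<theta> (?w \<otimes> m \<otimes> inv ?w) = \<theta> m" if m: "m \<in> H" for m
  proof -
    have "x \<otimes> (?w \<otimes> m \<otimes> inv ?w) \<otimes> inv x = y \<otimes> (x \<otimes> m \<otimes> inv x) \<otimes> inv y"
      using x yG m by (simp add: m_assoc inv_mult_group)
    then have "\<theta> (?w \<otimes> m \<otimes> inv ?w) = \<sigma> (\<theta> (y \<otimes> (x \<otimes> m \<otimes> inv x) \<otimes> inv y))"
      using fixes_charD[OF x_fixes inv_op_closed2[OF wG m]] by simp
    also have "\<dots> = \<sigma> (\<theta> (x \<otimes> m \<otimes> inv x))" using y x m inv_op_closed2 by (simp add: stab_iff)
    also have "\<dots> = \<theta> m" using fixes_charD[OF x_fixes m] .
    finally show ?thesis .
  qed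
  then show ?thesis using wG by (simp add: stab_iff)
qed

lemma fixes_char_conj_stab:
  assumes \<sigma>: "Qab_endo \<sigma>" and \<theta>: "\<theta> ` H \<subseteq> Qab"
    and x: "x \<in> carrier G" and x_fixes: "fixes_char G H \<theta> x \<sigma>" and y: "y \<in> stab G H \<theta>"
  shows "x \<otimes> y \<otimes> inv x \<in> stab G H \<theta>"
proof -
  let ?z = "x \<otimes> y \<otimes> inv x"
  have yG: "y \<in> carrier G" and zG: "?z \<in> carrier G" using x y by (auto simp: stab_iff)
  have "\<theta> (?z \<otimes> m \<otimes> inv ?z) = \<theta> m" if m: "m \<in> H" for m
  proof -
    let ?m = "inv x \<otimes> m \<otimes> x"
    have m': "?m \<in> H" using inv_op_closed1[OF x m] .
    have "\<sigma> (\<theta> (?z \<otimes> m \<otimes> inv ?z)) = \<sigma> (\<theta> (x \<otimes> (y \<otimes> ?m \<otimes> inv y) \<otimes> inv x))"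
      using x yG m by (simp add: m_assoc inv_mult_group)
    also have "\<dots> = \<theta> (y \<otimes> ?m \<otimes> inv y)" using fixes_charD[OF x_fixes inv_op_closed2[OF yG m']] .
    also have "\<dots> = \<theta> ?m" using y m' by (simp add: stab_iff)
    also have "\<dots> = \<sigma> (\<theta> (x \<otimes> ?m \<otimes> inv x))" using fixes_charD[OF x_fixes m'] by simp
    also have "x \<otimes> ?m \<otimes> inv x = m" using x m by (simp add: m_assoc)
    finally show ?thesis
      using Qab_endo.eq_iff[OF \<sigma>] \<theta> m inv_op_closed2[OF zG m] by auto
  qed
  then show ?thesis using zG by (simp add: stab_iff)
qed

lemma fixes_char_conj_stab_eq:
  assumes \<sigma>: "Qab_endo \<sigma>" and \<theta>: "\<theta> ` H \<subseteq> Qab" and x: "x \<in> carrier G" and x_fixes: "fixes_char G H \<theta> x \<sigma>"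
  shows "{inv x \<otimes> y \<otimes> x | y. y \<in> stab G H \<theta>} = stab G H \<theta>"
proof (intro equalityI subsetI)
  fix y assume "y \<in> {inv x \<otimes> y \<otimes> x | y. y \<in> stab G H \<theta>}"
  then show "y \<in> stab G H \<theta>" using fixes_char_inv_conj_stab[OF x x_fixes] by blast
next
  fix y assume y: "y \<in> stab G H \<theta>"
  then have "y = inv x \<otimes> (x \<otimes> y \<otimes> inv x) \<otimes> x" using x by (simp add: m_assoc stab_iff)
  then show "y \<in> {inv x \<otimes> y \<otimes> x | y. y \<in> stab G H \<theta>}"
    using fixes_char_conj_stab[OF \<sigma> \<theta> x x_fixes y] by blast
qed

end

section \<open>Projective representations associated with an invariant character\<close>

locale associated_proj_rep = normal N G for N and G (structure) +
  fixes \<theta> :: "'a \<Rightarrow> complex" and d :: nat and P :: "'a \<Rightarrow> complex mat" and \<alpha> :: "'a \<Rightarrow> 'a \<Rightarrow> complex"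
  assumes finite_carrier: "finite (carrier G)"
    and irr_char: "irr_char G N \<theta>"
    and proj_rep: "proj_rep G (stab G N \<theta>) d P \<alpha>"
    and associated: "associated G N \<theta> d P"
    and P_Qab: "\<forall>y\<in>stab G N \<theta>. \<forall>i<d. \<forall>j<d. P y $$ (i, j) \<in> Qab"
begin

abbreviation G\<^sub>\<theta> :: "'a set" where "G\<^sub>\<theta> \<equiv> stab G N \<theta>"

sublocale finite_subgroup G N
  by unfold_locales (rule finite_subset[OF subset finite_carrier])

sublocale inertia: subgroup G\<^sub>\<theta> G
  by (rule stab_subgroup)

lemma P_rep: "is_rep G N d P"
  and P_trace: "n \<in> N \<Longrightarrow> mat_trace (P n) = \<theta> n"
  and P_left: "n \<in> N \<Longrightarrow> y \<in> G\<^sub>\<theta> \<Longrightarrow> P (n \<otimes> y) = P n * P y"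
  and P_right: "n \<in> N \<Longrightarrow> y \<in> G\<^sub>\<theta> \<Longrightarrow> P (y \<otimes> n) = P y * P n"
  using associated unfolding associated_def by auto

lemma P_carrier [simp]: "y \<in> G\<^sub>\<theta> \<Longrightarrow> P y \<in> carrier_mat d d"
  and P_mult: "x \<in> G\<^sub>\<theta> \<Longrightarrow> y \<in> G\<^sub>\<theta> \<Longrightarrow> P x * P y = \<alpha> x y \<cdot>\<^sub>m P (x \<otimes> y)"
  and \<alpha>_nonzero: "x \<in> G\<^sub>\<theta> \<Longrightarrow> y \<in> G\<^sub>\<theta> \<Longrightarrow> \<alpha> x y \<noteq> 0"
  using proj_rep unfolding proj_rep_def by auto

lemma Qab_mat_P: "y \<in> G\<^sub>\<theta> \<Longrightarrow> Qab_mat (P y)"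
  using P_Qab P_carrier unfolding Qab_mat_def by (metis carrier_matD)

lemma P_one: "P \<one> = 1\<^sub>m d"
  using is_rep_one[OF P_rep] .

lemma subset_inertia: "N \<subseteq> G\<^sub>\<theta>"
  using character_subset_stab[OF P_rep] P_trace by simp

lemma \<theta>_Qab: "\<theta> ` N \<subseteq> Qab"
  using P_trace Qab_mat_trace[OF P_carrier Qab_mat_P] subset_inertia by force

lemma P_irr: "irr_rep G N d P"
proof -
  obtain d' \<rho> where \<rho>: "irr_rep G N d' \<rho>" and \<theta>: "\<forall>n\<in>N. \<theta> n = mat_trace (\<rho> n)"
    using irr_char unfolding irr_char_def by blast
  then have "d = d' \<and> similar_reps N d' \<rho> P"
    using same_character_similar[OF \<rho> P_rep] P_trace by simp
  then show ?thesis using irr_rep_similar[OF _ P_rep] \<rho> by blast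
qed

lemma dim_pos: "d > 0"
  using P_irr unfolding irr_rep_def by blast

lemma P_commutant_scalar: "A \<in> carrier_mat d d \<Longrightarrow> \<forall>n\<in>N. A * P n = P n * A \<Longrightarrow> \<exists>c. A = c \<cdot>\<^sub>m 1\<^sub>m d"
  using irr_rep_commutant_scalar[OF P_irr] by blast

definition P_inv :: "'a \<Rightarrow> complex mat" where
  "P_inv y = inverse (\<alpha> y (inv y)) \<cdot>\<^sub>m P (inv y)"

lemma P_inv_carrier [simp]: "y \<in> G\<^sub>\<theta> \<Longrightarrow> P_inv y \<in> carrier_mat d d"
  unfolding P_inv_def by simp

lemma P_P_inv: "y \<in> G\<^sub>\<theta> \<Longrightarrow> P y * P_inv y = 1\<^sub>m d"
  unfolding P_inv_def
  by (simp add: mult_smult_distrib[of _ d d _ d] P_mult \<alpha>_nonzero smult_smult_mat P_one)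

lemma P_inv_P: "y \<in> G\<^sub>\<theta> \<Longrightarrow> P_inv y * P y = 1\<^sub>m d"
  using mat_mult_left_right_inverse[OF P_carrier P_inv_carrier P_P_inv] .

lemma P_inv_P_cancel: "y \<in> G\<^sub>\<theta> \<Longrightarrow> X \<in> carrier_mat d d \<Longrightarrow> P_inv y * (P y * X) = X"
  by (rule mult_inverse_mat_cancel[OF P_inv_carrier P_carrier P_inv_P])

lemma P_P_inv_cancel: "y \<in> G\<^sub>\<theta> \<Longrightarrow> X \<in> carrier_mat d d \<Longrightarrow> P y * (P_inv y * X) = X"
  by (rule mult_inverse_mat_cancel[OF P_carrier P_inv_carrier P_P_inv])

lemma \<alpha>_Qab:
  assumes x: "x \<in> G\<^sub>\<theta>" and y: "y \<in> G\<^sub>\<theta>"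
  shows "\<alpha> x y \<in> Qab"
proof -
  have xy: "x \<otimes> y \<in> G\<^sub>\<theta>" using x y by simp
  obtain i j where ij: "i < d" "j < d" "P (x \<otimes> y) $$ (i, j) \<noteq> 0"
    using right_invertible_mat_nonzero_entry[OF P_carrier P_inv_carrier P_P_inv dim_pos] xy by blast
  have "(P x * P y) $$ (i, j) = \<alpha> x y * P (x \<otimes> y) $$ (i, j)"
    using P_mult[OF x y] ij P_carrier[OF xy] by simp
  then have "\<alpha> x y = (P x * P y) $$ (i, j) / P (x \<otimes> y) $$ (i, j)"
    using ij(3) by simp
  moreover have "(P x * P y) $$ (i, j) \<in> Qab"
    using Qab_mat_mult[OF P_carrier[OF x] P_carrier[OF y] Qab_mat_P[OF x] Qab_mat_P[OF y]]
      P_carrier[OF x] P_carrier[OF y] ij unfolding Qab_mat_def by simp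
  moreover have "P (x \<otimes> y) $$ (i, j) \<in> Qab"
    using Qab_mat_P[OF xy] P_carrier[OF xy] ij unfolding Qab_mat_def by simp
  ultimately show ?thesis by simp
qed

lemma Qab_mat_P_inv: "y \<in> G\<^sub>\<theta> \<Longrightarrow> Qab_mat (P_inv y)"
  unfolding P_inv_def by (simp add: \<alpha>_Qab Qab_mat_P)

lemma P_conj_normal:
  assumes y: "y \<in> G\<^sub>\<theta>" and n: "n \<in> N"
  shows "P (y \<otimes> n \<otimes> inv y) = P y * P n * P_inv y"
proof -
  let ?m = "y \<otimes> n \<otimes> inv y"
  have m: "?m \<in> N" using inv_op_closed2 n y by simp
  have "P ?m = (P ?m * P y) * P_inv y"
    using m y subset_inertia by (simp add: square_mat_simps[where n = d] P_P_inv subsetD)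
  also have "P ?m * P y = P y * P n"
    using P_left[OF m y] P_right[OF n y] n y by (simp add: m_assoc)
  finally show ?thesis .
qed

lemma map_mat_P_P_inv:
  assumes \<sigma>: "Qab_endo \<sigma>" and y: "y \<in> G\<^sub>\<theta>"
  shows "map_mat \<sigma> (P y) * map_mat \<sigma> (P_inv y) = 1\<^sub>m d"
proof -
  have "map_mat \<sigma> (P y) * map_mat \<sigma> (P_inv y) = map_mat \<sigma> (P y * P_inv y)"
    using Qab_endo.map_mat_mult[OF \<sigma> P_carrier[OF y] P_inv_carrier[OF y] Qab_mat_P[OF y] Qab_mat_P_inv[OF y]] ..
  then show ?thesis using P_P_inv[OF y] Qab_endo.map_mat_one[OF \<sigma>] by simp
qed

lemma map_mat_P_inv_P:
  assumes \<sigma>: "Qab_endo \<sigma>" and y: "y \<in> G\<^sub>\<theta>"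
  shows "map_mat \<sigma> (P_inv y) * map_mat \<sigma> (P y) = 1\<^sub>m d"
proof -
  have "map_mat \<sigma> (P_inv y) * map_mat \<sigma> (P y) = map_mat \<sigma> (P_inv y * P y)"
    using Qab_endo.map_mat_mult[OF \<sigma> P_inv_carrier[OF y] P_carrier[OF y] Qab_mat_P_inv[OF y] Qab_mat_P[OF y]] ..
  then show ?thesis using P_inv_P[OF y] Qab_endo.map_mat_one[OF \<sigma>] by simp
qed

lemma smult_conj_P_cancel:
  assumes y: "y \<in> G\<^sub>\<theta>" and L: "L \<in> carrier_mat d d" "L' \<in> carrier_mat d d" "L * L' = 1\<^sub>m d"
    and eq: "a \<cdot>\<^sub>m (L' * P y * L) = b \<cdot>\<^sub>m (L' * P y * L)"
  shows "a = b"
proof -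
  have "L * (a \<cdot>\<^sub>m (L' * P y * L)) * L' = L * (b \<cdot>\<^sub>m (L' * P y * L)) * L'" using eq by simp
  then have "a \<cdot>\<^sub>m P y = b \<cdot>\<^sub>m P y"
    using y L by (simp add: square_mat_simps[where n = d] smult_smult_mat mult_inverse_mat_cancel[OF L, where k = d])
  then show ?thesis
    using smult_right_invertible_mat_cancel[OF P_carrier P_inv_carrier P_P_inv dim_pos] y by blast
qed

definition is_mu :: "'a \<Rightarrow> (complex \<Rightarrow> complex) \<Rightarrow> ('a \<Rightarrow> complex) \<Rightarrow> bool" where
  "is_mu x \<sigma> \<mu> \<longleftrightarrow>
     (\<forall>y. y \<notin> G\<^sub>\<theta> \<longrightarrow> \<mu> y = undefined) \<and>
     (\<forall>y\<in>G\<^sub>\<theta>. \<mu> y \<noteq> 0) \<and>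
     (\<forall>y\<in>G\<^sub>\<theta>. \<forall>n\<in>N. \<mu> (n \<otimes> y) = \<mu> y) \<and>
     \<mu> \<one> = 1 \<and>
     (\<exists>L\<in>carrier_mat d d. \<exists>L'\<in>carrier_mat d d. L * L' = 1\<^sub>m d \<and> L' * L = 1\<^sub>m d \<and>
        (\<forall>y\<in>G\<^sub>\<theta>. conj_proj G P x \<sigma> y = \<mu> y \<cdot>\<^sub>m (L' * P y * L)))"

lemma mu_eq_The: "mu G N \<theta> d P x \<sigma> = (THE \<mu>. is_mu x \<sigma> \<mu>)"
  unfolding mu_def is_mu_def ..

lemma is_mu_normal_subgroup: "is_mu x \<sigma> \<mu> \<Longrightarrow> n \<in> N \<Longrightarrow> \<mu> n = 1"
proof -
  assume "is_mu x \<sigma> \<mu>" "n \<in> N"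
  then have "\<mu> (n \<otimes> \<one>) = \<mu> \<one>" "\<mu> \<one> = 1" unfolding is_mu_def using inertia.one_closed by blast+
  then show ?thesis using \<open>n \<in> N\<close> by simp
qed

lemma is_muD:
  assumes "is_mu x \<sigma> \<mu>"
  obtains L L' where "L \<in> carrier_mat d d" "L' \<in> carrier_mat d d" "L * L' = 1\<^sub>m d" "L' * L = 1\<^sub>m d"
    "\<And>y. y \<in> G\<^sub>\<theta> \<Longrightarrow> conj_proj G P x \<sigma> y = \<mu> y \<cdot>\<^sub>m (L' * P y * L)"
  using assms unfolding is_mu_def by blast

lemma is_mu_pair_conj:
  assumes \<mu>1: "is_mu x \<sigma> \<mu>1" and \<mu>2: "is_mu x \<sigma> \<mu>2"
  obtains A A' where "A \<in> carrier_mat d d" "A' \<in> carrier_mat d d" "A * A' = 1\<^sub>m d" "A' * A = 1\<^sub>m d"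
    "\<And>y. y \<in> G\<^sub>\<theta> \<Longrightarrow> \<mu>1 y \<cdot>\<^sub>m P y = A * (\<mu>2 y \<cdot>\<^sub>m P y) * A'"
proof -
  obtain L1 L1' where L1: "L1 \<in> carrier_mat d d" "L1' \<in> carrier_mat d d" "L1 * L1' = 1\<^sub>m d" "L1' * L1 = 1\<^sub>m d"
    and eq1: "\<And>y. y \<in> G\<^sub>\<theta> \<Longrightarrow> conj_proj G P x \<sigma> y = \<mu>1 y \<cdot>\<^sub>m (L1' * P y * L1)"
    using is_muD[OF \<mu>1] by blast
  obtain L2 L2' where L2: "L2 \<in> carrier_mat d d" "L2' \<in> carrier_mat d d" "L2 * L2' = 1\<^sub>m d" "L2' * L2 = 1\<^sub>m d"
    and eq2: "\<And>y. y \<in> G\<^sub>\<theta> \<Longrightarrow> conj_proj G P x \<sigma> y = \<mu>2 y \<cdot>\<^sub>m (L2' * P y * L2)"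
    using is_muD[OF \<mu>2] by blast
  have conj: "\<mu>1 y \<cdot>\<^sub>m P y = (L1 * L2') * (\<mu>2 y \<cdot>\<^sub>m P y) * (L2 * L1')" if y: "y \<in> G\<^sub>\<theta>" for y
  proof -
    have "\<mu>1 y \<cdot>\<^sub>m P y = L1 * (\<mu>1 y \<cdot>\<^sub>m (L1' * P y * L1)) * L1'"
      using L1 y by (simp add: square_mat_simps[where n = d] mult_inverse_mat_cancel[OF L1(1-3), where k = d])
    also have "\<dots> = L1 * (\<mu>2 y \<cdot>\<^sub>m (L2' * P y * L2)) * L1'" using eq1[OF y] eq2[OF y] by simp
    also have "\<dots> = (L1 * L2') * (\<mu>2 y \<cdot>\<^sub>m P y) * (L2 * L1')"
      using L1 L2 y by (simp add: square_mat_simps[where n = d])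
    finally show ?thesis .
  qed
  have inverse: "(L1 * L2') * (L2 * L1') = 1\<^sub>m d" "(L2 * L1') * (L1 * L2') = 1\<^sub>m d"
    using L1 L2 by (simp_all add: square_mat_simps[where n = d] mult_inverse_mat_cancel[OF L2(2,1,4)]
        mult_inverse_mat_cancel[OF L1(2,1,4)])
  show ?thesis
    by (rule that[of "L1 * L2'" "L2 * L1'"]) (use L1 L2 conj inverse in \<open>simp_all add: square_mat_mult_carrier\<close>)
qed

lemma is_mu_unique:
  assumes \<mu>1: "is_mu x \<sigma> \<mu>1" and \<mu>2: "is_mu x \<sigma> \<mu>2"
  shows "\<mu>1 = \<mu>2"
proof
  obtain A A' where A: "A \<in> carrier_mat d d" "A' \<in> carrier_mat d d" "A * A' = 1\<^sub>m d" "A' * A = 1\<^sub>m d"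
    and transport: "\<And>y. y \<in> G\<^sub>\<theta> \<Longrightarrow> \<mu>1 y \<cdot>\<^sub>m P y = A * (\<mu>2 y \<cdot>\<^sub>m P y) * A'"
    using is_mu_pair_conj[OF \<mu>1 \<mu>2] by blast
  have "A * P n = P n * A" if n: "n \<in> N" for n
    using transport[of n] subset_inertia is_mu_normal_subgroup[OF \<mu>1 n] is_mu_normal_subgroup[OF \<mu>2 n] n A
    by (intro conj_eq_imp_commute) auto
  then obtain c where "A = c \<cdot>\<^sub>m 1\<^sub>m d" using P_commutant_scalar A(1) by blast
  fix y
  show "\<mu>1 y = \<mu>2 y"
  proof (cases "y \<in> G\<^sub>\<theta>")
    case False
    then show ?thesis using \<mu>1 \<mu>2 unfolding is_mu_def by simp
  next
    case y: True
    then have "\<mu>1 y \<cdot>\<^sub>m P y = \<mu>2 y \<cdot>\<^sub>m P y"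
      using transport scalar_mat_conj[OF \<open>A = c \<cdot>\<^sub>m 1\<^sub>m d\<close> A(2,3)] by simp
    then show ?thesis
      using smult_right_invertible_mat_cancel[OF P_carrier P_inv_carrier P_P_inv dim_pos] y by blast
  qed
qed

lemma mu_eqI: "is_mu x \<sigma> \<mu> \<Longrightarrow> mu G N \<theta> d P x \<sigma> = \<mu>"
  unfolding mu_eq_The by (rule the_equality) (auto intro: is_mu_unique)

text \<open>The pair (x, sigma) lies in the stabiliser (G x H)_theta; the Galois part sigma only needs to be
  an injective endomorphism of Q^ab here.\<close>

definition stabilizes :: "'a \<Rightarrow> (complex \<Rightarrow> complex) \<Rightarrow> bool" where
  "stabilizes x \<sigma> \<longleftrightarrow> x \<in> carrier G \<and> Qab_endo \<sigma> \<and> fixes_char G N \<theta> x \<sigma>"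

lemma stabilizes_inertia: "g \<in> G\<^sub>\<theta> \<Longrightarrow> stabilizes g (\<lambda>z. z)"
  unfolding stabilizes_def stab_def using Qab_endo_id by blast

context
  fixes x \<sigma> assumes x\<sigma>: "stabilizes x \<sigma>"
begin

interpretation \<sigma>: Qab_endo \<sigma>
  using x\<sigma> unfolding stabilizes_def by blast

lemma stabilizes_carrier: "x \<in> carrier G"
  using x\<sigma> unfolding stabilizes_def by blast

lemma conj_inertia: "y \<in> G\<^sub>\<theta> \<Longrightarrow> x \<otimes> y \<otimes> inv x \<in> G\<^sub>\<theta>"
  using x\<sigma> fixes_char_conj_stab \<theta>_Qab unfolding stabilizes_def by blast

lemma conj_proj_carrier [simp]: "y \<in> G\<^sub>\<theta> \<Longrightarrow> conj_proj G P x \<sigma> y \<in> carrier_mat d d"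
  unfolding conj_proj_def using conj_inertia by simp

lemma conj_proj_mult:
  assumes "y \<in> G\<^sub>\<theta>" "z \<in> G\<^sub>\<theta>" "P (x \<otimes> (y \<otimes> z) \<otimes> inv x) = P (x \<otimes> y \<otimes> inv x) * P (x \<otimes> z \<otimes> inv x)"
  shows "conj_proj G P x \<sigma> (y \<otimes> z) = conj_proj G P x \<sigma> y * conj_proj G P x \<sigma> z"
  unfolding conj_proj_def using assms conj_inertia
  by (simp add: \<sigma>.map_mat_mult[OF P_carrier P_carrier Qab_mat_P Qab_mat_P])

lemma conj_proj_mult_left:
  assumes n: "n \<in> N" and y: "y \<in> G\<^sub>\<theta>"
  shows "conj_proj G P x \<sigma> (n \<otimes> y) = conj_proj G P x \<sigma> n * conj_proj G P x \<sigma> y"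
proof (rule conj_proj_mult)
  have "x \<otimes> (n \<otimes> y) \<otimes> inv x = (x \<otimes> n \<otimes> inv x) \<otimes> (x \<otimes> y \<otimes> inv x)"
    using stabilizes_carrier n y by (simp add: m_assoc)
  then show "P (x \<otimes> (n \<otimes> y) \<otimes> inv x) = P (x \<otimes> n \<otimes> inv x) * P (x \<otimes> y \<otimes> inv x)"
    using P_left[OF inv_op_closed2[OF stabilizes_carrier n] conj_inertia[OF y]] by simp
qed (use n y subset_inertia in auto)

lemma conj_proj_mult_right:
  assumes n: "n \<in> N" and y: "y \<in> G\<^sub>\<theta>"
  shows "conj_proj G P x \<sigma> (y \<otimes> n) = conj_proj G P x \<sigma> y * conj_proj G P x \<sigma> n"
proof (rule conj_proj_mult)
  have "x \<otimes> (y \<otimes> n) \<otimes> inv x = (x \<otimes> y \<otimes> inv x) \<otimes> (x \<otimes> n \<otimes> inv x)"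
    using stabilizes_carrier n y by (simp add: m_assoc)
  then show "P (x \<otimes> (y \<otimes> n) \<otimes> inv x) = P (x \<otimes> y \<otimes> inv x) * P (x \<otimes> n \<otimes> inv x)"
    using P_right[OF inv_op_closed2[OF stabilizes_carrier n] conj_inertia[OF y]] by simp
qed (use n y subset_inertia in auto)

lemma conj_proj_trace:
  assumes n: "n \<in> N"
  shows "mat_trace (conj_proj G P x \<sigma> n) = \<theta> n"
proof -
  have m: "x \<otimes> n \<otimes> inv x \<in> N" using inv_op_closed2[OF stabilizes_carrier n] .
  then have m': "x \<otimes> n \<otimes> inv x \<in> G\<^sub>\<theta>" using subset_inertia by blast
  have "mat_trace (conj_proj G P x \<sigma> n) = \<sigma> (\<theta> (x \<otimes> n \<otimes> inv x))"
    unfolding conj_proj_def by (simp add: \<sigma>.mat_trace_map_mat[OF P_carrier[OF m'] Qab_mat_P[OF m']] P_trace[OF m])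
  also have "\<dots> = \<theta> n" using x\<sigma> n unfolding stabilizes_def by (blast dest: fixes_charD)
  finally show ?thesis .
qed

lemma conj_proj_rep: "is_rep G N d (conj_proj G P x \<sigma>)"
  unfolding is_rep_def
proof (intro conjI ballI)
  show "conj_proj G P x \<sigma> \<one> = 1\<^sub>m d"
    unfolding conj_proj_def using stabilizes_carrier by (simp add: P_one)
next
  fix n m assume "n \<in> N" "m \<in> N"
  then show "conj_proj G P x \<sigma> (n \<otimes> m) = conj_proj G P x \<sigma> n * conj_proj G P x \<sigma> m"
    using conj_proj_mult_left subset_inertia by blast
qed (use subset_inertia in auto)

lemma conj_proj_similar: "similar_reps N d P (conj_proj G P x \<sigma>)"
  using same_character_similar[OF P_irr conj_proj_rep] conj_proj_trace P_trace by simp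

lemma conj_proj_right_inverse:
  "y \<in> G\<^sub>\<theta> \<Longrightarrow> conj_proj G P x \<sigma> y * map_mat \<sigma> (P_inv (x \<otimes> y \<otimes> inv x)) = 1\<^sub>m d"
  unfolding conj_proj_def using conj_inertia
  by (simp add: \<sigma>.map_mat_mult[symmetric, OF P_carrier P_inv_carrier Qab_mat_P Qab_mat_P_inv] P_P_inv)

lemma is_muI:
  assumes L: "L \<in> carrier_mat d d" "L' \<in> carrier_mat d d" "L * L' = 1\<^sub>m d" "L' * L = 1\<^sub>m d"
    and nonzero: "\<And>y. y \<in> G\<^sub>\<theta> \<Longrightarrow> c y \<noteq> 0"
    and conj: "\<And>y. y \<in> G\<^sub>\<theta> \<Longrightarrow> conj_proj G P x \<sigma> y = c y \<cdot>\<^sub>m (L' * P y * L)"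
    and normal_one: "\<And>n. n \<in> N \<Longrightarrow> c n = 1"
  shows "is_mu x \<sigma> (\<lambda>y. if y \<in> G\<^sub>\<theta> then c y else undefined)"
  unfolding is_mu_def
proof (intro conjI ballI allI impI)
  show "\<exists>L\<in>carrier_mat d d. \<exists>L'\<in>carrier_mat d d. L * L' = 1\<^sub>m d \<and> L' * L = 1\<^sub>m d \<and>
      (\<forall>y\<in>G\<^sub>\<theta>. conj_proj G P x \<sigma> y = (if y \<in> G\<^sub>\<theta> then c y else undefined) \<cdot>\<^sub>m (L' * P y * L))"
    by (rule bexI[of _ L], rule bexI[of _ L']) (use L conj in auto)
next
  fix y n assume y: "y \<in> G\<^sub>\<theta>" and n: "n \<in> N"
  then have n': "n \<in> G\<^sub>\<theta>" and ny: "n \<otimes> y \<in> G\<^sub>\<theta>" using subset_inertia by auto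
  have "c (n \<otimes> y) \<cdot>\<^sub>m (L' * P (n \<otimes> y) * L) = conj_proj G P x \<sigma> n * conj_proj G P x \<sigma> y"
    using conj[OF ny] conj_proj_mult_left[OF n y] by simp
  also have "\<dots> = c y \<cdot>\<^sub>m (L' * (P n * P y) * L)"
    using conj[OF n'] conj[OF y] normal_one[OF n] L n' y
    by (simp add: square_mat_simps[where n = d] mult_inverse_mat_cancel[OF L(1-3), where k = d])
  also have "P n * P y = P (n \<otimes> y)" using P_left[OF n y] by simp
  finally have "c (n \<otimes> y) = c y" using smult_conj_P_cancel[OF ny L(1-3)] by blast
  then show "(if n \<otimes> y \<in> G\<^sub>\<theta> then c (n \<otimes> y) else undefined) = (if y \<in> G\<^sub>\<theta> then c y else undefined)"
    using ny y by simp
qed (use L nonzero conj normal_one subgroup_one in auto)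

lemma conj_proj_normalized_commute:
  assumes L: "L \<in> carrier_mat d d" "L' \<in> carrier_mat d d" "L * L' = 1\<^sub>m d" "L' * L = 1\<^sub>m d"
    and on_normal: "\<And>n. n \<in> N \<Longrightarrow> conj_proj G P x \<sigma> n = L' * P n * L"
    and y: "y \<in> G\<^sub>\<theta>" and n: "n \<in> N"
  defines "Q \<equiv> L * conj_proj G P x \<sigma> y * L'"
  shows "(P_inv y * Q) * P n = P n * (P_inv y * Q)"
proof -
  let ?C = "conj_proj G P x \<sigma>" and ?m = "y \<otimes> n \<otimes> inv y"
  have P_normal: "P k = L * ?C k * L'" if "k \<in> N" for k
    using on_normal[OF that] that subset_inertia L by (simp add: conj_mat_cancel[OF L(1-3)] subsetD)
  have m: "?m \<in> N" using inv_op_closed2 n y by simp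
  have n': "n \<in> G\<^sub>\<theta>" and m': "?m \<in> G\<^sub>\<theta>" using n m subset_inertia by auto
  have "Q * P n = L * (?C y * ?C n) * L'"
    unfolding Q_def P_normal[OF n] using L y n'
    by (simp add: square_mat_simps[where n = d] mult_inverse_mat_cancel[OF L(2,1,4), where k = d])
  also have "?C y * ?C n = ?C ?m * ?C y"
    using conj_proj_mult_right[OF n y] conj_proj_mult_left[OF m y] n y by (simp add: m_assoc)
  also have "L * (?C ?m * ?C y) * L' = P ?m * Q"
    unfolding Q_def P_normal[OF m] using L y m'
    by (simp add: square_mat_simps[where n = d] mult_inverse_mat_cancel[OF L(2,1,4), where k = d])
  finally have "Q * P n = P y * P n * P_inv y * Q" using P_conj_normal[OF y n] by simp
  moreover have "Q \<in> carrier_mat d d" unfolding Q_def using L conj_proj_carrier[OF y] by simp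
  ultimately show ?thesis using y n' by (simp add: square_mat_simps[where n = d] P_inv_P_cancel)
qed

lemma conj_proj_scalar_multiple:
  assumes L: "L \<in> carrier_mat d d" "L' \<in> carrier_mat d d" "L * L' = 1\<^sub>m d" "L' * L = 1\<^sub>m d"
    and on_normal: "\<And>n. n \<in> N \<Longrightarrow> conj_proj G P x \<sigma> n = L' * P n * L"
    and y: "y \<in> G\<^sub>\<theta>"
  shows "\<exists>c. conj_proj G P x \<sigma> y = c \<cdot>\<^sub>m (L' * P y * L)"
proof -
  define Q where "Q = L * conj_proj G P x \<sigma> y * L'"
  have Q: "Q \<in> carrier_mat d d" unfolding Q_def using L conj_proj_carrier[OF y] by simp
  obtain c where c: "P_inv y * Q = c \<cdot>\<^sub>m 1\<^sub>m d"
    using P_commutant_scalar[of "P_inv y * Q"] conj_proj_normalized_commute[OF L on_normal y] Q y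
    unfolding Q_def by (auto simp: square_mat_simps[where n = d])
  have "Q = c \<cdot>\<^sub>m P y"
    using arg_cong[OF c, of "\<lambda>A. P y * A"] Q y by (simp add: square_mat_simps[where n = d] P_P_inv_cancel)
  have "conj_proj G P x \<sigma> y = L' * Q * L"
    unfolding Q_def by (rule conj_mat_cancel[OF L(2,1,4) conj_proj_carrier[OF y], symmetric])
  also have "\<dots> = c \<cdot>\<^sub>m (L' * P y * L)"
    using \<open>Q = c \<cdot>\<^sub>m P y\<close> L y by (simp add: square_mat_simps[where n = d])
  finally show ?thesis by blast
qed

lemma is_mu_exists: "\<exists>\<mu>. is_mu x \<sigma> \<mu>"
proof -
  let ?C = "conj_proj G P x \<sigma>"
  obtain L L' where L: "L \<in> carrier_mat d d" "L' \<in> carrier_mat d d" "L * L' = 1\<^sub>m d" "L' * L = 1\<^sub>m d"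
    and on_normal: "\<And>n. n \<in> N \<Longrightarrow> ?C n = L' * P n * L"
    using conj_proj_similar unfolding similar_reps_def by blast
  define c where "c y = (SOME c. ?C y = c \<cdot>\<^sub>m (L' * P y * L))" for y
  have conj: "?C y = c y \<cdot>\<^sub>m (L' * P y * L)" if "y \<in> G\<^sub>\<theta>" for y
    unfolding c_def using conj_proj_scalar_multiple[OF L on_normal that] by (rule someI_ex)
  have "c y \<noteq> 0" if y: "y \<in> G\<^sub>\<theta>" for y
  proof -
    obtain i j where "i < d" "j < d" "?C y $$ (i, j) \<noteq> 0"
      using right_invertible_mat_nonzero_entry[OF conj_proj_carrier[OF y] _
          conj_proj_right_inverse[OF y] dim_pos] conj_inertia[OF y] P_inv_carrier by auto
    then show ?thesis using conj[OF y] L y by auto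
  qed
  moreover have "c n = 1" if n: "n \<in> N" for n
    using conj[of n] on_normal[OF n] n subset_inertia smult_conj_P_cancel[OF _ L(1-3), of n "c n" 1]
    by auto
  ultimately show ?thesis using is_muI[OF L] conj by blast
qed

lemma mu_is_mu: "is_mu x \<sigma> (mu G N \<theta> d P x \<sigma>)"
  using is_mu_exists mu_eqI by blast

end

definition mu_alpha :: "'a \<Rightarrow> 'a \<Rightarrow> complex" where
  "mu_alpha g y = \<alpha> g (inv g) / (\<alpha> g (y \<otimes> inv g) * \<alpha> y (inv g))"

lemma mu_alpha_Qab: "g \<in> G\<^sub>\<theta> \<Longrightarrow> y \<in> G\<^sub>\<theta> \<Longrightarrow> mu_alpha g y \<in> Qab - {0}"
  unfolding mu_alpha_def by (simp add: \<alpha>_Qab \<alpha>_nonzero)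

lemma conj_proj_inertia:
  assumes g: "g \<in> G\<^sub>\<theta>" and M': "M' \<in> carrier_mat d d" "P g * M' = 1\<^sub>m d" and y: "y \<in> G\<^sub>\<theta>"
  shows "conj_proj G P g (\<lambda>z. z) y = mu_alpha g y \<cdot>\<^sub>m (P g * P y * M')"
proof -
  have "M' * P g = 1\<^sub>m d" using mat_mult_left_right_inverse[OF P_carrier[OF g] M'] .
  then have "P (inv g) = M' * (P g * P (inv g))"
    using g by (simp add: mult_inverse_mat_cancel[OF M'(1) P_carrier[OF g], where k = d])
  also have "\<dots> = \<alpha> g (inv g) \<cdot>\<^sub>m M'"
    using g M' by (simp add: P_mult square_mat_simps[where n = d] P_one)
  finally have P_inv_g: "P (inv g) = \<alpha> g (inv g) \<cdot>\<^sub>m M'" .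
  define a where "a = \<alpha> y (inv g) * \<alpha> g (y \<otimes> inv g)"
  have "P g * P y * P (inv g) = P g * (P y * P (inv g))"
    using g y by (simp add: square_mat_simps[where n = d])
  also have "\<dots> = P g * (\<alpha> y (inv g) \<cdot>\<^sub>m P (y \<otimes> inv g))" using P_mult[of y "inv g"] g y by simp
  also have "\<dots> = a \<cdot>\<^sub>m P (g \<otimes> y \<otimes> inv g)"
    unfolding a_def using P_mult[of g "y \<otimes> inv g"] g y
    by (simp add: square_mat_simps[where n = d] smult_smult_mat m_assoc mult.commute)
  finally have "a \<cdot>\<^sub>m P (g \<otimes> y \<otimes> inv g) = \<alpha> g (inv g) \<cdot>\<^sub>m (P g * P y * M')"
    unfolding P_inv_g using g y M' by (simp add: square_mat_simps[where n = d])
  moreover have "a \<noteq> 0" unfolding a_def using \<alpha>_nonzero g y by simp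
  ultimately have "P (g \<otimes> y \<otimes> inv g) = (inverse a * \<alpha> g (inv g)) \<cdot>\<^sub>m (P g * P y * M')"
    by (metis smult_smult_mat one_smult_mat left_inverse)
  also have "inverse a * \<alpha> g (inv g) = mu_alpha g y"
    unfolding a_def mu_alpha_def by (simp add: divide_inverse mult.commute)
  finally show ?thesis unfolding conj_proj_def by simp
qed

lemma mu_alpha_normal:
  assumes g: "g \<in> G\<^sub>\<theta>" and n: "n \<in> N"
  shows "mu_alpha g n = 1"
proof -
  have n': "n \<in> G\<^sub>\<theta>" using n subset_inertia by blast
  have "1 \<cdot>\<^sub>m (P g * P n * P_inv g) = mu_alpha g n \<cdot>\<^sub>m (P g * P n * P_inv g)"
    using P_conj_normal[OF g n] conj_proj_inertia[OF g P_inv_carrier[OF g] P_P_inv[OF g] n']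
    unfolding conj_proj_def by simp
  then show ?thesis using smult_conj_P_cancel[OF n' P_inv_carrier[OF g] P_carrier[OF g] P_inv_P[OF g]] by auto
qed

lemma mu_inertia:
  assumes g: "g \<in> G\<^sub>\<theta>" and y: "y \<in> G\<^sub>\<theta>"
  shows "mu G N \<theta> d P g (\<lambda>z. z) y = mu_alpha g y"
proof -
  have "is_mu g (\<lambda>z. z) (\<lambda>y. if y \<in> G\<^sub>\<theta> then mu_alpha g y else undefined)"
    using stabilizes_inertia[OF g] P_inv_carrier[OF g] P_carrier[OF g] P_inv_P[OF g] P_P_inv[OF g]
      mu_alpha_Qab[OF g] conj_proj_inertia[OF g P_inv_carrier[OF g] P_P_inv[OF g]] mu_alpha_normal[OF g]
    by (intro is_muI) auto
  then show ?thesis using mu_eqI y by simp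
qed

lemma stabilizes_inertia_mult:
  assumes tx: "stabilizes (t \<otimes> x) \<sigma>" and t: "t \<in> G\<^sub>\<theta>" and x: "x \<in> carrier G"
  shows "stabilizes x \<sigma>"
  using tx fixes_char_stab_mult[OF t x] x unfolding stabilizes_def by blast

lemma conj_proj_inertia_mult:
  assumes tx: "stabilizes (t \<otimes> x) \<sigma>" and t: "t \<in> G\<^sub>\<theta>" and x: "x \<in> carrier G" and y: "y \<in> G\<^sub>\<theta>"
  shows "conj_proj G P (t \<otimes> x) \<sigma> y = \<sigma> (mu_alpha t (x \<otimes> y \<otimes> inv x)) \<cdot>\<^sub>m
    (map_mat \<sigma> (P t) * conj_proj G P x \<sigma> y * map_mat \<sigma> (P_inv t))"
proof -
  have x\<sigma>: "stabilizes x \<sigma>" using stabilizes_inertia_mult[OF tx t x] .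
  then interpret \<sigma>: Qab_endo \<sigma> unfolding stabilizes_def by blast
  let ?z = "x \<otimes> y \<otimes> inv x"
  have z: "?z \<in> G\<^sub>\<theta>" using conj_inertia[OF x\<sigma> y] .
  have "t \<otimes> x \<otimes> y \<otimes> inv (t \<otimes> x) = t \<otimes> ?z \<otimes> inv t" using t x y by (simp add: conj_mult)
  then have "conj_proj G P (t \<otimes> x) \<sigma> y = map_mat \<sigma> (mu_alpha t ?z \<cdot>\<^sub>m (P t * P ?z * P_inv t))"
    using conj_proj_inertia[OF t P_inv_carrier[OF t] P_P_inv[OF t] z] unfolding conj_proj_def by simp
  also have "\<dots> = \<sigma> (mu_alpha t ?z) \<cdot>\<^sub>m (map_mat \<sigma> (P t) * map_mat \<sigma> (P ?z) * map_mat \<sigma> (P_inv t))"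
  proof -
    have Ptz: "P t * P ?z \<in> carrier_mat d d" "Qab_mat (P t * P ?z)"
      using t z Qab_mat_mult[OF P_carrier[OF t] P_carrier[OF z] Qab_mat_P[OF t] Qab_mat_P[OF z]]
      by (auto simp: square_mat_mult_carrier)
    have "Qab_mat (P t * P ?z * P_inv t)"
      using Qab_mat_mult[OF Ptz(1) P_inv_carrier[OF t] Ptz(2) Qab_mat_P_inv[OF t]] .
    then show ?thesis
      using t z mu_alpha_Qab[OF t z] Ptz
        \<sigma>.map_mat_mult[OF Ptz(1) P_inv_carrier[OF t] Ptz(2) Qab_mat_P_inv[OF t]]
        \<sigma>.map_mat_mult[OF P_carrier[OF t] P_carrier[OF z] Qab_mat_P[OF t] Qab_mat_P[OF z]]
      by (simp add: \<sigma>.map_mat_smult)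
  qed
  finally show ?thesis unfolding conj_proj_def .
qed

lemma mu_inertia_mult:
  assumes tx: "stabilizes (t \<otimes> x) \<sigma>" and t: "t \<in> G\<^sub>\<theta>" and x: "x \<in> carrier G" and y: "y \<in> G\<^sub>\<theta>"
  shows "mu G N \<theta> d P (t \<otimes> x) \<sigma> y = \<sigma> (mu G N \<theta> d P t (\<lambda>z. z) (x \<otimes> y \<otimes> inv x)) * mu G N \<theta> d P x \<sigma> y"
proof -
  have x\<sigma>: "stabilizes x \<sigma>" using stabilizes_inertia_mult[OF tx t x] .
  then interpret \<sigma>: Qab_endo \<sigma> unfolding stabilizes_def by blast
  let ?\<mu> = "mu G N \<theta> d P x \<sigma>"
  define c where "c y = \<sigma> (mu_alpha t (x \<otimes> y \<otimes> inv x)) * ?\<mu> y" for y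
  obtain L L' where L: "L \<in> carrier_mat d d" "L' \<in> carrier_mat d d" "L * L' = 1\<^sub>m d" "L' * L = 1\<^sub>m d"
    and conj: "\<And>y. y \<in> G\<^sub>\<theta> \<Longrightarrow> conj_proj G P x \<sigma> y = ?\<mu> y \<cdot>\<^sub>m (L' * P y * L)"
    using is_muD[OF mu_is_mu[OF x\<sigma>]] by blast
  let ?M = "L * map_mat \<sigma> (P_inv t)" and ?M' = "map_mat \<sigma> (P t) * L'"
  have M: "?M \<in> carrier_mat d d" "?M' \<in> carrier_mat d d" "?M * ?M' = 1\<^sub>m d" "?M' * ?M = 1\<^sub>m d"
    using L t map_mat_P_P_inv[OF \<sigma>.Qab_endo_axioms t] map_mat_P_inv_P[OF \<sigma>.Qab_endo_axioms t]
    by (simp_all add: square_mat_simps[where n = d] mult_inverse_mat_cancel[OF L(1-3), where k = d]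
        mult_inverse_mat_cancel[OF L(2,1,4), where k = d]
        mult_inverse_mat_cancel[OF _ _ map_mat_P_inv_P[OF \<sigma>.Qab_endo_axioms t], where k = d])
  have "is_mu (t \<otimes> x) \<sigma> (\<lambda>y. if y \<in> G\<^sub>\<theta> then c y else undefined)"
  proof (rule is_muI[OF tx M])
    fix y assume y: "y \<in> G\<^sub>\<theta>"
    have "\<sigma> (mu_alpha t (x \<otimes> y \<otimes> inv x)) \<noteq> 0"
      using mu_alpha_Qab[OF t conj_inertia[OF x\<sigma> y]] \<sigma>.map_eq_zero_iff by simp
    moreover have "?\<mu> y \<noteq> 0" using mu_is_mu[OF x\<sigma>] y unfolding is_mu_def by blast
    ultimately show "c y \<noteq> 0" unfolding c_def by simp
    show "conj_proj G P (t \<otimes> x) \<sigma> y = c y \<cdot>\<^sub>m (?M' * P y * ?M)"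
      using conj_proj_inertia_mult[OF tx t x y] conj[OF y] L t y
      by (simp add: c_def square_mat_simps[where n = d] smult_smult_mat)
  next
    fix n assume n: "n \<in> N"
    then show "c n = 1"
      unfolding c_def using mu_alpha_normal[OF t inv_op_closed2[OF x n]] is_mu_normal_subgroup[OF mu_is_mu[OF x\<sigma>] n]
      by simp
  qed
  then show ?thesis using mu_eqI y mu_inertia[OF t conj_inertia[OF x\<sigma> y]] by (simp add: c_def)
qed

end

theorem lemma1p7:
  fixes G :: "('a, 'b) monoid_scheme" and N :: "'a set" and \<theta> :: "'a \<Rightarrow> complex"
    and p d :: nat and P :: "'a \<Rightarrow> complex mat" and \<alpha> :: "'a \<Rightarrow> 'a \<Rightarrow> complex"
  assumes "prime p"
    and "group G" and "finite (carrier G)"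
    and "H_triple p G N \<theta>"
    and "proj_rep G (stab G N \<theta>) d P \<alpha>"
    and "associated G N \<theta> d P"
    and "\<forall>y\<in>stab G N \<theta>. \<forall>i<d. \<forall>j<d. P y $$ (i, j) \<in> Qab"
  shows
    "(\<forall>g\<in>stab G N \<theta>.
        (\<forall>y\<in>stab G N \<theta>.
           mu G N \<theta> d P g (\<lambda>z. z) y
             = \<alpha> g (inv\<^bsub>G\<^esub> g) / (\<alpha> g (y \<otimes>\<^bsub>G\<^esub> inv\<^bsub>G\<^esub> g) * \<alpha> y (inv\<^bsub>G\<^esub> g))) \<and>
        (\<forall>M'\<in>carrier_mat d d. P g * M' = 1\<^sub>m d \<and> M' * P g = 1\<^sub>m d \<longrightarrow>
           (\<forall>y\<in>stab G N \<theta>.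
              conj_proj G P g (\<lambda>z. z) y = mu G N \<theta> d P g (\<lambda>z. z) y \<cdot>\<^sub>m (P g * P y * M'))) \<and>
        (\<forall>y\<in>stab G N \<theta>. mu G N \<theta> d P g (\<lambda>z. z) y \<in> Qab - {0}))
     \<and>
     (\<forall>g \<sigma> t x. g \<in> carrier G \<and> \<sigma> \<in> HGal p \<and> fixes_char G N \<theta> g \<sigma> \<and>
        t \<in> stab G N \<theta> \<and> x \<in> carrier G \<and> g = t \<otimes>\<^bsub>G\<^esub> x \<longrightarrow>
        fixes_char G N \<theta> x \<sigma> \<and>
        {inv\<^bsub>G\<^esub> x \<otimes>\<^bsub>G\<^esub> y \<otimes>\<^bsub>G\<^esub> x | y. y \<in> stab G N \<theta>} = stab G N \<theta> \<and>
        (\<forall>y\<in>stab G N \<theta>.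
           mu G N \<theta> d P g \<sigma> y
             = \<sigma> (mu G N \<theta> d P t (\<lambda>z. z) (x \<otimes>\<^bsub>G\<^esub> y \<otimes>\<^bsub>G\<^esub> inv\<^bsub>G\<^esub> x)) * mu G N \<theta> d P x \<sigma> y))"
proof -
  from assms(4) have "N \<lhd> G" and "irr_char G N \<theta>" unfolding H_triple_def by auto
  then interpret associated_proj_rep N G \<theta> d P \<alpha>
    using assms(3,5-7) by (intro associated_proj_rep.intro associated_proj_rep_axioms.intro) auto
  show ?thesis
  proof (intro conjI ballI allI impI)
    fix g y assume g: "g \<in> stab G N \<theta>" and y: "y \<in> stab G N \<theta>"
    show "mu G N \<theta> d P g (\<lambda>z. z) y
        = \<alpha> g (inv\<^bsub>G\<^esub> g) / (\<alpha> g (y \<otimes>\<^bsub>G\<^esub> inv\<^bsub>G\<^esub> g) * \<alpha> y (inv\<^bsub>G\<^esub> g))"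
      using mu_inertia[OF g y] unfolding mu_alpha_def .
    show "mu G N \<theta> d P g (\<lambda>z. z) y \<in> Qab - {0}"
      using mu_inertia[OF g y] mu_alpha_Qab[OF g y] by simp
  next
    fix g M' y assume g: "g \<in> stab G N \<theta>" and M': "M' \<in> carrier_mat d d"
      and inverse: "P g * M' = 1\<^sub>m d \<and> M' * P g = 1\<^sub>m d" and y: "y \<in> stab G N \<theta>"
    show "conj_proj G P g (\<lambda>z. z) y = mu G N \<theta> d P g (\<lambda>z. z) y \<cdot>\<^sub>m (P g * P y * M')"
      using conj_proj_inertia[OF g M'] inverse mu_inertia[OF g y] y by simp
  next
    fix g \<sigma> t x
    assume "g \<in> carrier G \<and> \<sigma> \<in> HGal p \<and> fixes_char G N \<theta> g \<sigma> \<and>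
      t \<in> stab G N \<theta> \<and> x \<in> carrier G \<and> g = t \<otimes>\<^bsub>G\<^esub> x"
    then have tx: "stabilizes (t \<otimes>\<^bsub>G\<^esub> x) \<sigma>" and t: "t \<in> stab G N \<theta>" and x: "x \<in> carrier G"
      and g: "g = t \<otimes>\<^bsub>G\<^esub> x"
      unfolding stabilizes_def using Qab_endo_HGal by auto
    \<comment> \<open>Membership in H is used only through Qab_endo_HGal.\<close>
    have x\<sigma>: "stabilizes x \<sigma>" using stabilizes_inertia_mult[OF tx t x] .
    then show "fixes_char G N \<theta> x \<sigma>" unfolding stabilizes_def by blast
    show "{inv\<^bsub>G\<^esub> x \<otimes>\<^bsub>G\<^esub> y \<otimes>\<^bsub>G\<^esub> x | y. y \<in> stab G N \<theta>} = stab G N \<theta>"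
      using x\<sigma> fixes_char_conj_stab_eq \<theta>_Qab unfolding stabilizes_def by blast
    fix y assume "y \<in> stab G N \<theta>"
    then show "mu G N \<theta> d P g \<sigma> y
        = \<sigma> (mu G N \<theta> d P t (\<lambda>z. z) (x \<otimes>\<^bsub>G\<^esub> y \<otimes>\<^bsub>G\<^esub> inv\<^bsub>G\<^esub> x)) * mu G N \<theta> d P x \<sigma> y"
      unfolding g by (rule mu_inertia_mult[OF tx t x])
  qed
qed


end
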